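(* Under the standing assumptions, let $z\in\mathbb{C}$ with $\operatorname{Re}z\le\frac12(1-\frac1c)$. Then there is $n>0$ such that for all $u\in C_0^\infty(\{|x|\ge n\})$ and all sufficiently small $\lambda>0$, $$\|(\mathcal{A}^\lambda-z)u\|_{L^2}\ge\tfrac14\big(1-\tfrac1c\big)\|u\|_{L^2}.$$
   Context: Standing assumptions: $f:\mathbb{R}\to\mathbb{R}$ is $C^1$ with $f(0)=f'(0)=0$. $\mathcal{M}$ is the Fourier multiplier with symbol $\alpha\ge0$, $a|k|^m\le\alpha(k)\le b|k|^m$ for large $|k|$ ($m\ge1$), $\alpha$ locally bounded. $c>1$ and $u_c\in H^m(\mathbb{R})$ is a real solution of $\mathcal{M}u_c+(1-\frac1c)u_c-\frac1cf(u_c)=0$ with $u_c(x)\to0$ as $|x|\to\infty$. With $\mathcal{E}^{\lambda,-}$ the Fourier multiplier with symbol $\frac{\lambda}{\lambda-ick}$, $\mathcal{A}^\lambda=\mathcal{M}+1-\frac1c(1-\mathcal{E}^{\lambda,-})(1+f'(u_c))$. *)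

theory Defs
  imports "HOL-Analysis.Analysis"
begin

definition smooth_fun :: "(real \<Rightarrow> complex) \<Rightarrow> bool" where
  "smooth_fun u \<longleftrightarrow> (\<exists>D :: nat \<Rightarrow> real \<Rightarrow> complex. D 0 = u \<and>
      (\<forall>j x. (D j has_vector_derivative D (Suc j) x) (at x)))"

definition fsupport :: "(real \<Rightarrow> complex) \<Rightarrow> real set" where
  "fsupport u = closure {x. u x \<noteq> 0}"

definition test_on :: "real set \<Rightarrow> (real \<Rightarrow> complex) \<Rightarrow> bool" where
  "test_on S u \<longleftrightarrow> smooth_fun u \<and> compact (fsupport u) \<and> fsupport u \<subseteq> S"

abbreviation test_fun :: "(real \<Rightarrow> complex) \<Rightarrow> bool" where
  "test_fun u \<equiv> test_on UNIV u"

definition L2 :: "(real \<Rightarrow> complex) \<Rightarrow> bool" where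
  "L2 g \<longleftrightarrow> g \<in> borel_measurable lborel \<and> integrable lborel (\<lambda>x. (cmod (g x))\<^sup>2)"

definition L2norm :: "(real \<Rightarrow> complex) \<Rightarrow> real" where
  "L2norm g = sqrt (integral\<^sup>L lborel (\<lambda>x. (cmod (g x))\<^sup>2))"

text \<open>Fourier transform (convention: hat g(k) = integral of e^{-ikx} g(x) dx) and
  its inverse, as Lebesgue integrals.\<close>
definition fourier :: "(real \<Rightarrow> complex) \<Rightarrow> real \<Rightarrow> complex" where
  "fourier g k = integral\<^sup>L lborel (\<lambda>x. cis (- (k * x)) * g x)"

definition inv_fourier :: "(real \<Rightarrow> complex) \<Rightarrow> real \<Rightarrow> complex" where
  "inv_fourier h x = complex_of_real (1 / (2 * pi)) * integral\<^sup>L lborel (\<lambda>k. cis (k * x) * h k)"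

text \<open>Fourier multiplier with symbol sigma, applied to a function whose Fourier
  transform is given by the integral above (compactly supported L^2 functions).\<close>
definition fmult :: "(real \<Rightarrow> complex) \<Rightarrow> (real \<Rightarrow> complex) \<Rightarrow> real \<Rightarrow> complex" where
  "fmult \<sigma> g = inv_fourier (\<lambda>k. \<sigma> k * fourier g k)"

text \<open>w is the (L^2, Plancherel) Fourier transform of the L^2 function u:
  characterised by Parseval's identity against all test functions.\<close>
definition is_L2_fourier :: "(real \<Rightarrow> complex) \<Rightarrow> (real \<Rightarrow> complex) \<Rightarrow> bool" where
  "is_L2_fourier u w \<longleftrightarrow> L2 u \<and> L2 w \<and>
     (\<forall>\<phi>. test_fun \<phi> \<longrightarrow>
        integral\<^sup>L lborel (\<lambda>x. u x * cnj (\<phi> x)) =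
        complex_of_real (1 / (2 * pi)) * integral\<^sup>L lborel (\<lambda>k. w k * cnj (fourier \<phi> k)))"

definition sobolev :: "real \<Rightarrow> (real \<Rightarrow> complex) \<Rightarrow> bool" where
  "sobolev m u \<longleftrightarrow> (\<exists>w. is_L2_fourier u w \<and>
      L2 (\<lambda>k. complex_of_real ((1 + k\<^sup>2) powr (m / 2)) * w k))"

text \<open>u solves M u + (1 - 1/c) u - (1/c) f(u) = 0 (equality of L^2 functions,
  expressed by pairing with all test functions; M u has Fourier transform alpha * hat u).\<close>
definition solves_profile_eq ::
  "(real \<Rightarrow> real) \<Rightarrow> (real \<Rightarrow> real) \<Rightarrow> real \<Rightarrow> (real \<Rightarrow> real) \<Rightarrow> bool" where
  "solves_profile_eq \<alpha> f c u \<longleftrightarrow> (\<exists>w. is_L2_fourier (\<lambda>x. complex_of_real (u x)) w \<and>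
     (\<forall>\<phi>. test_fun \<phi> \<longrightarrow>
        complex_of_real (1 / (2 * pi)) *
          integral\<^sup>L lborel (\<lambda>k. complex_of_real (\<alpha> k) * w k * cnj (fourier \<phi> k))
        + integral\<^sup>L lborel (\<lambda>x. complex_of_real ((1 - 1 / c) * u x - (1 / c) * f (u x)) * cnj (\<phi> x))
        = 0))"

definition Esym :: "real \<Rightarrow> real \<Rightarrow> real \<Rightarrow> complex" where
  "Esym c lam k = complex_of_real lam / (complex_of_real lam - \<i> * complex_of_real (c * k))"

definition Aop :: "(real \<Rightarrow> real) \<Rightarrow> (real \<Rightarrow> real) \<Rightarrow> real \<Rightarrow> (real \<Rightarrow> real) \<Rightarrow> real
                    \<Rightarrow> (real \<Rightarrow> complex) \<Rightarrow> real \<Rightarrow> complex" where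
  "Aop \<alpha> df c uc lam u x =
     (let g = (\<lambda>y. (1 + complex_of_real (df (uc y))) * u y) in
      fmult (\<lambda>k. complex_of_real (\<alpha> k)) u x + u x
      - complex_of_real (1 / c) * (g x - fmult (Esym c lam) g x))"

end

theory Submission
  imports Defs "HOL-Probability.Probability"
begin

text \<open>
  Let v = (A^lam - z) u for a test function u supported in |x| >= n.  By Parseval,
    <v, u> = (1/2 pi) <alpha u^, u^> + |u|^2 - (1/c) (<g, u> - (1/2 pi) <E g^, u^>) - z |u|^2,
  where g = (1 + f'(u_c)) u and E is the symbol lam/(lam - i c k).  Since alpha >= 0 the first
  term has nonnegative real part; if |f'(u_c)| <= delta on the support of u then
  Re <g, u> <= (1 + delta) |u|^2, and as Re E >= 0, |E| <= 1 and g^ = u^ + (f'(u_c) u)^,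
  Re <E g^, u^> >= - 2 pi delta |u|^2 by the Plancherel inequality.  Hence
    Re <v, u> >= (1 - (1 + 2 delta)/c - Re z) |u|^2 >= 1/4 (1 - 1/c) |u|^2
  for delta = (c - 1)/8, and Cauchy-Schwarz gives |v| >= 1/4 (1 - 1/c) |u| for every lam > 0.
  The decay of u_c provides n with |f'(u_c)| <= delta on |x| >= n.
\<close>

lemma cis_borel[measurable]: "cis \<in> borel_measurable borel"
  by (intro borel_measurable_continuous_onI continuous_intros)

lemma cnj_borel[measurable]: "f \<in> borel_measurable M \<Longrightarrow> (\<lambda>x. cnj (f x)) \<in> borel_measurable M"
  by (rule measurable_compose[of f M borel], assumption, intro borel_measurable_continuous_onI continuous_intros)

lemma integrable_by_bound:
  fixes f :: "real \<Rightarrow> 'b::{banach,second_countable_topology}"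
  assumes "f \<in> borel_measurable borel" "integrable lborel g" "\<And>x. norm (f x) \<le> g x"
  shows "integrable lborel f"
proof (rule Bochner_Integration.integrable_bound[of lborel g])
  show "AE x in lborel. norm (f x) \<le> norm (g x)"
    by (rule AE_I2) (metis assms(3) abs_ge_self order_trans real_norm_def)
qed (use assms in simp_all)

lemma L2_iff: "L2 g \<longleftrightarrow> g \<in> borel_measurable borel \<and> integrable lborel (\<lambda>x. (cmod (g x))\<^sup>2)"
  unfolding L2_def by simp

lemma L2norm_sq: "(L2norm g)\<^sup>2 = (\<integral>x. (cmod (g x))\<^sup>2 \<partial>lborel)"
  unfolding L2norm_def by (simp add: integral_nonneg_AE)

lemma L2norm_nonneg: "L2norm g \<ge> 0"
  unfolding L2norm_def by (simp add: integral_nonneg_AE)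

text \<open>The product of two L2 functions is integrable (since |pq| <= (|p|^2 + |q|^2)/2);
  in particular the L2 pairing is defined. L2 is a complex vector space.\<close>
lemma L2_mult_integrable:
  assumes "L2 p" "L2 q"
  shows "integrable lborel (\<lambda>x. p x * q x)"
proof (rule integrable_by_bound)
  have [measurable]: "p \<in> borel_measurable borel" "q \<in> borel_measurable borel"
    using assms by (auto simp: L2_iff)
  show "(\<lambda>x. p x * q x) \<in> borel_measurable borel" by measurable
  show "integrable lborel (\<lambda>x. ((cmod (p x))\<^sup>2 + (cmod (q x))\<^sup>2) / 2)"
    using assms by (auto simp: L2_iff)
  fix x
  show "norm (p x * q x) \<le> ((cmod (p x))\<^sup>2 + (cmod (q x))\<^sup>2) / 2"
    using sum_squares_bound[of "cmod (p x)" "cmod (q x)"] by (simp add: norm_mult power2_eq_square)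
qed

lemma L2_cnj: "L2 g \<Longrightarrow> L2 (\<lambda>x. cnj (g x))"
  unfolding L2_iff by (auto intro: cnj_borel)

lemma L2_pairing_integrable: "L2 f \<Longrightarrow> L2 g \<Longrightarrow> integrable lborel (\<lambda>x. f x * cnj (g x))"
  by (intro L2_mult_integrable L2_cnj)

lemma L2_add:
  assumes "L2 f" "L2 g"
  shows "L2 (\<lambda>x. f x + g x)"
  unfolding L2_iff
proof
  have [measurable]: "f \<in> borel_measurable borel" "g \<in> borel_measurable borel"
    using assms by (auto simp: L2_iff)
  show "(\<lambda>x. f x + g x) \<in> borel_measurable borel" by measurable
  show "integrable lborel (\<lambda>x. (cmod (f x + g x))\<^sup>2)"
  proof (rule integrable_by_bound[of _ "\<lambda>x. 2 * (cmod (f x))\<^sup>2 + 2 * (cmod (g x))\<^sup>2"])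
    show "integrable lborel (\<lambda>x. 2 * (cmod (f x))\<^sup>2 + 2 * (cmod (g x))\<^sup>2)"
      using assms by (simp add: L2_iff)
    fix x
    have "(cmod (f x + g x))\<^sup>2 \<le> (cmod (f x) + cmod (g x))\<^sup>2"
      by (intro power_mono norm_triangle_ineq) auto
    also have "\<dots> \<le> 2 * (cmod (f x))\<^sup>2 + 2 * (cmod (g x))\<^sup>2"
      using sum_squares_bound[of "cmod (f x)" "cmod (g x)"] by (simp add: power2_eq_square algebra_simps)
    finally show "norm ((cmod (f x + g x))\<^sup>2) \<le> 2 * (cmod (f x))\<^sup>2 + 2 * (cmod (g x))\<^sup>2" by simp
  qed measurable
qed

lemma L2_scale: "L2 f \<Longrightarrow> L2 (\<lambda>x. a * f x)"
  by (auto simp: L2_iff norm_mult power_mult_distrib)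

lemma L2_diff: "L2 f \<Longrightarrow> L2 g \<Longrightarrow> L2 (\<lambda>x. f x - g x)"
  using L2_add[of f "\<lambda>x. - 1 * g x"] L2_scale[of g "- 1"] by simp

lemma L2_cauchy_schwarz:
  assumes "L2 p" "L2 q"
  shows "(\<integral>x. cmod (p x) * cmod (q x) \<partial>lborel) \<le> L2norm p * L2norm q"
proof -
  have [measurable]: "p \<in> borel_measurable borel" "q \<in> borel_measurable borel"
    and ip: "integrable lborel (\<lambda>x. (cmod (p x))\<^sup>2)" and iq: "integrable lborel (\<lambda>x. (cmod (q x))\<^sup>2)"
    using assms by (auto simp: L2_iff)
  have ipq: "integrable lborel (\<lambda>x. cmod (p x) * cmod (q x))"
    using integrable_norm[OF L2_mult_integrable[OF assms]] by (simp add: norm_mult)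
  have sq: "(\<integral>\<^sup>+x. ennreal (cmod (g x)) ^ 2 \<partial>lborel) = ennreal ((L2norm g)\<^sup>2)"
    if "integrable lborel (\<lambda>x. (cmod (g x))\<^sup>2)" for g :: "real \<Rightarrow> complex"
  proof -
    have "(\<integral>\<^sup>+x. ennreal (cmod (g x)) ^ 2 \<partial>lborel) = (\<integral>\<^sup>+x. ennreal ((cmod (g x))\<^sup>2) \<partial>lborel)"
      by (intro nn_integral_cong) (rule ennreal_power, simp)
    also have "\<dots> = ennreal ((L2norm g)\<^sup>2)"
      unfolding L2norm_sq by (rule nn_integral_eq_integral[OF that]) auto
    finally show ?thesis .
  qed
  let ?I = "\<integral>x. cmod (p x) * cmod (q x) \<partial>lborel"
  have "(\<integral>\<^sup>+x. ennreal (cmod (p x)) * ennreal (cmod (q x)) \<partial>lborel)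
      = (\<integral>\<^sup>+x. ennreal (cmod (p x) * cmod (q x)) \<partial>lborel)"
    by (intro nn_integral_cong) (rule ennreal_mult[symmetric]; simp)
  also have "\<dots> = ennreal ?I"
    by (rule nn_integral_eq_integral[OF ipq]) auto
  finally have I: "(\<integral>\<^sup>+x. ennreal (cmod (p x)) * ennreal (cmod (q x)) \<partial>lborel) = ennreal ?I" .
  have "ennreal (?I\<^sup>2) = (ennreal ?I)\<^sup>2"
    by (rule ennreal_power[symmetric]) (simp add: integral_nonneg_AE)
  also have "\<dots> = (\<integral>\<^sup>+x. ennreal (cmod (p x)) * ennreal (cmod (q x)) \<partial>lborel)\<^sup>2"
    by (simp only: I)
  also have "\<dots> \<le> (\<integral>\<^sup>+x. ennreal (cmod (p x)) ^ 2 \<partial>lborel) * (\<integral>\<^sup>+x. ennreal (cmod (q x)) ^ 2 \<partial>lborel)"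
    by (rule Cauchy_Schwarz_nn_integral) auto
  also have "\<dots> = ennreal ((L2norm p * L2norm q)\<^sup>2)"
    unfolding sq[OF ip] sq[OF iq] power_mult_distrib by (rule ennreal_mult[symmetric]) auto
  finally have "ennreal (?I\<^sup>2) \<le> ennreal ((L2norm p * L2norm q)\<^sup>2)" .
  then have "?I\<^sup>2 \<le> (L2norm p * L2norm q)\<^sup>2"
    by (rule ennreal_le_iff[THEN iffD1, rotated]) simp
  then show ?thesis
    by (rule power2_le_imp_le) (simp add: L2norm_nonneg)
qed

lemma L2_pairing_bound:
  assumes "L2 f" "L2 g"
  shows "cmod (\<integral>x. f x * cnj (g x) \<partial>lborel) \<le> L2norm f * L2norm g"
proof -
  have "cmod (\<integral>x. f x * cnj (g x) \<partial>lborel) \<le> (\<integral>x. cmod (f x * cnj (g x)) \<partial>lborel)"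
    by (rule integral_norm_bound)
  also have "\<dots> = (\<integral>x. cmod (f x) * cmod (g x) \<partial>lborel)" by (simp add: norm_mult)
  also have "\<dots> \<le> L2norm f * L2norm g" by (rule L2_cauchy_schwarz[OF assms])
  finally show ?thesis .
qed

text \<open>Coercivity of a pairing gives a lower bound on norms: if Re <v,u> >= kappa |u|^2 then
  |v| >= kappa |u|.  This is how the resolvent estimate is obtained from the quadratic form.\<close>
lemma L2norm_ge_of_pairing:
  assumes "L2 v" "L2 u" and pair: "\<kappa> * (L2norm u)\<^sup>2 \<le> Re (\<integral>x. v x * cnj (u x) \<partial>lborel)"
  shows "\<kappa> * L2norm u \<le> L2norm v"
proof (cases "L2norm u = 0")
  case False
  then have pos: "L2norm u > 0" using L2norm_nonneg[of u] by simp
  have "(\<kappa> * L2norm u) * L2norm u \<le> Re (\<integral>x. v x * cnj (u x) \<partial>lborel)"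
    using pair by (simp add: power2_eq_square mult.assoc)
  also have "\<dots> \<le> cmod (\<integral>x. v x * cnj (u x) \<partial>lborel)" by (rule complex_Re_le_cmod)
  also have "\<dots> \<le> L2norm v * L2norm u" by (rule L2_pairing_bound[OF assms(1,2)])
  finally show ?thesis using pos by (rule mult_right_le_imp_le)
qed (simp add: L2norm_nonneg)

lemma integrable_tensor_product:
  fixes a b :: "real \<Rightarrow> complex"
  assumes [measurable]: "a \<in> borel_measurable borel" "b \<in> borel_measurable borel"
    and ia: "integrable lborel a" and ib: "integrable lborel b"
  shows "integrable (lborel \<Otimes>\<^sub>M lborel) (\<lambda>(x, k). a x * b k)"
proof (rule lborel_pair.Fubini_integrable)
  show "(\<lambda>(x, k). a x * b k) \<in> borel_measurable (lborel \<Otimes>\<^sub>M lborel)" by measurable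
  have "(\<lambda>x. LBINT y. norm (case (x, y) of (x, k) \<Rightarrow> a x * b k)) = (\<lambda>x. cmod (a x) * (LBINT y. cmod (b y)))"
    by (simp add: norm_mult)
  moreover have "integrable lborel (\<lambda>x. cmod (a x) * (LBINT y. cmod (b y)))"
    using ia by auto
  ultimately show "integrable lborel (\<lambda>x. LBINT y. norm (case (x, y) of (x, k) \<Rightarrow> a x * b k))" by simp
  show "AE x in lborel. integrable lborel (\<lambda>y. case (x, y) of (x, k) \<Rightarrow> a x * b k)"
    using ib by auto
qed

lemma integral_swap_bounded_kernel:
  fixes a b :: "real \<Rightarrow> complex" and \<kappa> :: "real \<Rightarrow> real \<Rightarrow> complex"
  assumes [measurable]: "a \<in> borel_measurable borel" "b \<in> borel_measurable borel"
    and ia: "integrable lborel a" and ib: "integrable lborel b"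
    and [measurable]: "(\<lambda>(x, k). \<kappa> x k) \<in> borel_measurable (lborel \<Otimes>\<^sub>M lborel)"
    and \<kappa>_bound: "\<And>x k. cmod (\<kappa> x k) \<le> 1"
  shows "(\<integral>x. a x * (\<integral>k. b k * \<kappa> x k \<partial>lborel) \<partial>lborel)
       = (\<integral>k. b k * (\<integral>x. a x * \<kappa> x k \<partial>lborel) \<partial>lborel)"
proof -
  have int: "integrable (lborel \<Otimes>\<^sub>M lborel) (\<lambda>(x, k). a x * b k * \<kappa> x k)"
  proof (rule Bochner_Integration.integrable_bound[OF integrable_tensor_product[OF assms(1-4)]])
    show "(\<lambda>(x, k). a x * b k * \<kappa> x k) \<in> borel_measurable (lborel \<Otimes>\<^sub>M lborel)" by measurable
    show "AE p in lborel \<Otimes>\<^sub>M lborel. norm (case p of (x, k) \<Rightarrow> a x * b k * \<kappa> x k)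
                                     \<le> norm (case p of (x, k) \<Rightarrow> a x * b k)"
      using \<kappa>_bound by (intro AE_I2) (auto simp: norm_mult intro!: mult_left_le)
  qed
  have "(\<integral>x. a x * (\<integral>k. b k * \<kappa> x k \<partial>lborel) \<partial>lborel) = (\<integral>x. (\<integral>k. a x * b k * \<kappa> x k \<partial>lborel) \<partial>lborel)"
    by (simp add: mult.assoc)
  also have "\<dots> = (\<integral>k. (\<integral>x. a x * b k * \<kappa> x k \<partial>lborel) \<partial>lborel)"
    using lborel_pair.Fubini_integral[OF int] by simp
  also have "\<dots> = (\<integral>k. b k * (\<integral>x. a x * \<kappa> x k \<partial>lborel) \<partial>lborel)"
    by (subst integral_mult_right_zero[symmetric]) (simp add: ac_simps)
  finally show ?thesis .
qed

text \<open>The Fourier transform of a centred Gaussian density, via the characteristic function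
  of the standard normal distribution.\<close>
lemma fourier_normal_density:
  assumes s: "\<sigma> > 0"
  shows "(\<integral>x. cis (a * x) * complex_of_real (normal_density 0 \<sigma> x) \<partial>lborel)
       = complex_of_real (exp (- (\<sigma> * a)\<^sup>2 / 2))"
proof -
  have std: "\<sigma> * normal_density 0 \<sigma> (\<sigma> * y) = std_normal_density y" for y
    using s by (simp add: normal_density_def power_mult_distrib real_sqrt_mult field_simps)
  have "(\<integral>x. cis (a * x) * complex_of_real (normal_density 0 \<sigma> x) \<partial>lborel)
      = \<bar>\<sigma>\<bar> *\<^sub>R (\<integral>y. cis (a * (0 + \<sigma> * y)) * complex_of_real (normal_density 0 \<sigma> (0 + \<sigma> * y)) \<partial>lborel)"
    using s by (intro lborel_integral_real_affine) simp
  also have "\<dots> = (\<integral>y. std_normal_density y *\<^sub>R iexp ((\<sigma> * a) * y) \<partial>lborel)"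
    using s by (simp add: std[symmetric] scaleR_conv_of_real cis_conv_exp ac_simps flip: integral_scaleR_right)
  also have "\<dots> = char std_normal_distribution (\<sigma> * a)"
    unfolding char_def by (subst integral_density) (auto simp: normal_density_nonneg)
  also have "\<dots> = complex_of_real (exp (- (\<sigma> * a)\<^sup>2 / 2))"
    by (simp add: char_std_normal_distribution)
  finally show ?thesis .
qed

lemma gauss_kernel_as_density:
  assumes "\<sigma> > 0"
  shows "exp (- (\<sigma> * (k' - k))\<^sup>2 / 2) = sqrt (2 * pi) / \<sigma> * normal_density k (1 / \<sigma>) k'"
proof -
  have "(\<sigma> * k - \<sigma> * k')\<^sup>2 = \<sigma>\<^sup>2 * (k - k')\<^sup>2"
    by (simp add: power2_eq_square algebra_simps)
  with assms show ?thesis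
    by (simp add: normal_density_def power_mult_distrib real_sqrt_divide field_simps power2_commute)
qed

lemma gauss_kernel_row_integral:
  assumes "\<sigma> > 0"
  shows "(\<integral>\<^sup>+k'. ennreal (exp (- (\<sigma> * (k' - k))\<^sup>2 / 2)) \<partial>lborel) = ennreal (sqrt (2 * pi) / \<sigma>)"
proof -
  have "(\<integral>\<^sup>+k'. ennreal (exp (- (\<sigma> * (k' - k))\<^sup>2 / 2)) \<partial>lborel)
      = (\<integral>\<^sup>+k'. ennreal (sqrt (2 * pi) / \<sigma>) * ennreal (normal_density k (1 / \<sigma>) k') \<partial>lborel)"
  proof (intro nn_integral_cong)
    fix k'
    show "ennreal (exp (- (\<sigma> * (k' - k))\<^sup>2 / 2))
        = ennreal (sqrt (2 * pi) / \<sigma>) * ennreal (normal_density k (1 / \<sigma>) k')"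
      unfolding gauss_kernel_as_density[OF assms] using assms
      by (intro ennreal_mult) (auto simp: normal_density_nonneg)
  qed
  also have "\<dots> = ennreal (sqrt (2 * pi) / \<sigma>)"
    using assms by (subst nn_integral_cmult) (simp_all add: nn_integral_eq_integral)
  finally show ?thesis .
qed

lemma schur_test_symmetric_kernel:
  fixes u :: "real \<Rightarrow> real" and K :: "real \<Rightarrow> real \<Rightarrow> real" and C :: ennreal
  assumes [measurable]: "u \<in> borel_measurable borel"
    and [measurable]: "(\<lambda>(k, k'). K k k') \<in> borel_measurable (lborel \<Otimes>\<^sub>M lborel)"
    and u_nonneg: "\<And>k. u k \<ge> 0" and K_nonneg: "\<And>k k'. K k k' \<ge> 0"
    and K_sym: "\<And>k k'. K k k' = K k' k"
    and K_row: "\<And>k. (\<integral>\<^sup>+k'. ennreal (K k k') \<partial>lborel) \<le> C"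
  shows "(\<integral>\<^sup>+k. \<integral>\<^sup>+k'. ennreal (u k * u k' * K k k') \<partial>lborel \<partial>lborel)
       \<le> C * (\<integral>\<^sup>+k. ennreal ((u k)\<^sup>2) \<partial>lborel)"
proof -
  define w where "w k = ennreal ((u k)\<^sup>2 / 2)" for k
  define A where "A = (\<integral>\<^sup>+k. \<integral>\<^sup>+k'. w k * ennreal (K k k') \<partial>lborel \<partial>lborel)"
  define B where "B = (\<integral>\<^sup>+k. \<integral>\<^sup>+k'. w k' * ennreal (K k k') \<partial>lborel \<partial>lborel)"
  have [measurable]: "w \<in> borel_measurable borel" unfolding w_def by measurable
  have "(\<integral>\<^sup>+k. \<integral>\<^sup>+k'. ennreal (u k * u k' * K k k') \<partial>lborel \<partial>lborel)
      \<le> (\<integral>\<^sup>+k. \<integral>\<^sup>+k'. w k * ennreal (K k k') + w k' * ennreal (K k k') \<partial>lborel \<partial>lborel)"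
  proof (intro nn_integral_mono)
    fix k k'
    have "u k * u k' \<le> (u k)\<^sup>2 / 2 + (u k')\<^sup>2 / 2"
      using sum_squares_bound[of "u k" "u k'"] by (simp add: power2_eq_square)
    then have "u k * u k' * K k k' \<le> ((u k)\<^sup>2 / 2 + (u k')\<^sup>2 / 2) * K k k'"
      by (rule mult_right_mono) (rule K_nonneg)
    then have "u k * u k' * K k k' \<le> ((u k)\<^sup>2 / 2) * K k k' + ((u k')\<^sup>2 / 2) * K k k'"
      by (simp add: distrib_right)
    then show "ennreal (u k * u k' * K k k') \<le> w k * ennreal (K k k') + w k' * ennreal (K k k')"
      unfolding w_def using K_nonneg[of k k']
      by (simp add: ennreal_mult[symmetric] ennreal_plus[symmetric] ennreal_leI del: ennreal_plus)
  qed
  also have "\<dots> = A + B"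
    unfolding A_def B_def
    by (simp add: nn_integral_add lborel.borel_measurable_nn_integral)
  also have "B = A"
  proof -
    have "B = (\<integral>\<^sup>+k'. \<integral>\<^sup>+k. w k' * ennreal (K k k') \<partial>lborel \<partial>lborel)"
      unfolding B_def by (rule lborel_pair.Fubini') measurable
    then show ?thesis unfolding A_def by (simp add: K_sym[of _ "_"])
  qed
  also have "A \<le> (\<integral>\<^sup>+k. w k * C \<partial>lborel)"
    unfolding A_def
    by (intro nn_integral_mono) (simp add: nn_integral_cmult mult_left_mono K_row)
  also have "(\<integral>\<^sup>+k. w k * C \<partial>lborel) + (\<integral>\<^sup>+k. w k * C \<partial>lborel)
           = C * (\<integral>\<^sup>+k. w k + w k \<partial>lborel)"
    by (simp add: nn_integral_add nn_integral_cmult mult.commute distrib_left)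
  also have "(\<lambda>k. w k + w k) = (\<lambda>k. ennreal ((u k)\<^sup>2))"
    unfolding w_def by (simp add: fun_eq_iff ennreal_plus[symmetric] del: ennreal_plus)
  finally show ?thesis by (simp add: add_mono)
qed

text \<open>For F(x) = int e^{i s k x} h(k) dk (s = +1 or -1) we show
  int |F|^2 <= 2 pi int |h|^2.  First the Gaussian-weighted energy of F is computed by Fubini:
  it equals the pairing of h with its convolution G against a Gaussian kernel.\<close>
lemma gaussian_wave_pairing:
  assumes s2: "s * s = 1" and sig: "\<sigma> > 0"
  shows "(\<integral>x. (complex_of_real (normal_density 0 \<sigma> x) * cis (- s * (k * x))) * cis (s * (k' * x)) \<partial>lborel)
       = complex_of_real (exp (- (\<sigma> * (k' - k))\<^sup>2 / 2))"
proof -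
  have "(\<integral>x. (complex_of_real (normal_density 0 \<sigma> x) * cis (- s * (k * x))) * cis (s * (k' * x)) \<partial>lborel)
      = (\<integral>x. cis ((s * (k' - k)) * x) * complex_of_real (normal_density 0 \<sigma> x) \<partial>lborel)"
    by (intro Bochner_Integration.integral_cong refl) (simp add: cis_mult algebra_simps)
  also have "\<dots> = complex_of_real (exp (- (\<sigma> * (s * (k' - k)))\<^sup>2 / 2))"
    by (rule fourier_normal_density[OF sig])
  also have "(\<sigma> * (s * (k' - k)))\<^sup>2 = (\<sigma> * (k' - k))\<^sup>2"
    using s2 by (simp add: power2_eq_square algebra_simps)
  finally show ?thesis .
qed

lemma gaussian_smoothed_transform:
  fixes h :: "real \<Rightarrow> complex"
  assumes s2: "s * s = 1" and [measurable]: "h \<in> borel_measurable borel"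
    and ih: "integrable lborel h" and sig: "\<sigma> > 0"
  shows "(\<integral>x. (\<integral>k'. cis (s * (k' * x)) * h k' \<partial>lborel)
              * (complex_of_real (normal_density 0 \<sigma> x) * cis (- s * (k * x))) \<partial>lborel)
       = (\<integral>k'. h k' * complex_of_real (exp (- (\<sigma> * (k' - k))\<^sup>2 / 2)) \<partial>lborel)"
proof -
  have ind: "integrable lborel (\<lambda>x. complex_of_real (normal_density 0 \<sigma> x) * cis (- s * (k * x)))"
    by (rule integrable_by_bound[of _ "normal_density 0 \<sigma>"]) (use sig in \<open>auto simp: norm_mult\<close>)
  have "(\<integral>x. (\<integral>k'. cis (s * (k' * x)) * h k' \<partial>lborel)
              * (complex_of_real (normal_density 0 \<sigma> x) * cis (- s * (k * x))) \<partial>lborel)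
      = (\<integral>x. (complex_of_real (normal_density 0 \<sigma> x) * cis (- s * (k * x)))
              * (\<integral>k'. h k' * cis (s * (k' * x)) \<partial>lborel) \<partial>lborel)"
    by (simp add: mult.commute)
  also have "\<dots> = (\<integral>k'. h k' * (\<integral>x. (complex_of_real (normal_density 0 \<sigma> x) * cis (- s * (k * x)))
                                        * cis (s * (k' * x)) \<partial>lborel) \<partial>lborel)"
    by (rule integral_swap_bounded_kernel) (use ih ind in auto)
  also have "\<dots> = (\<integral>k'. h k' * complex_of_real (exp (- (\<sigma> * (k' - k))\<^sup>2 / 2)) \<partial>lborel)"
    unfolding gaussian_wave_pairing[OF s2 sig] ..
  finally show ?thesis .
qed

lemma smoothed_energy_identity:
  fixes h :: "real \<Rightarrow> complex"
  assumes s2: "s * s = 1" and [measurable]: "h \<in> borel_measurable borel"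
    and ih: "integrable lborel h" and sig: "\<sigma> > 0"
  defines "F \<equiv> \<lambda>x. \<integral>k. cis (s * (k * x)) * h k \<partial>lborel"
    and "G \<equiv> \<lambda>k. \<integral>k'. h k' * complex_of_real (exp (- (\<sigma> * (k' - k))\<^sup>2 / 2)) \<partial>lborel"
  shows "integrable lborel (\<lambda>x. (cmod (F x))\<^sup>2 * normal_density 0 \<sigma> x)"
    and "complex_of_real (\<integral>x. (cmod (F x))\<^sup>2 * normal_density 0 \<sigma> x \<partial>lborel) = (\<integral>k. h k * cnj (G k) \<partial>lborel)"
proof -
  define N1 where "N1 = (\<integral>k. cmod (h k) \<partial>lborel)"
  define nd where "nd = normal_density 0 \<sigma>"
  have [measurable]: "nd \<in> borel_measurable borel" unfolding nd_def by simp
  have nd0: "nd x \<ge> 0" for x unfolding nd_def by simp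
  have ndi: "integrable lborel nd" unfolding nd_def using sig by simp
  have [measurable]: "F \<in> borel_measurable borel" unfolding F_def by measurable
  have Fb: "cmod (F x) \<le> N1" for x
    unfolding F_def N1_def using integral_norm_bound[of lborel "\<lambda>k. cis (s * (k * x)) * h k"] by (simp add: norm_mult)
  show "integrable lborel (\<lambda>x. (cmod (F x))\<^sup>2 * normal_density 0 \<sigma> x)"
  proof (rule integrable_by_bound[of _ "\<lambda>x. N1\<^sup>2 * nd x"])
    show "integrable lborel (\<lambda>x. N1\<^sup>2 * nd x)" using ndi by simp
    fix x
    have "(cmod (F x))\<^sup>2 \<le> N1\<^sup>2" using Fb[of x] by (simp add: power_mono)
    then show "norm ((cmod (F x))\<^sup>2 * normal_density 0 \<sigma> x) \<le> N1\<^sup>2 * nd x"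
      using nd0[of x] unfolding nd_def by (simp add: abs_mult mult_right_mono)
  qed simp
  define a where "a = (\<lambda>x. cnj (F x) * complex_of_real (nd x))"
  have [measurable]: "a \<in> borel_measurable borel" unfolding a_def by measurable
  have ia: "integrable lborel a"
  proof (rule integrable_by_bound[of _ "\<lambda>x. N1 * nd x"])
    show "integrable lborel (\<lambda>x. N1 * nd x)" using ndi by simp
    fix x show "norm (a x) \<le> N1 * nd x" unfolding a_def using Fb[of x] nd0[of x]
      by (simp add: norm_mult abs_of_nonneg mult_right_mono)
  qed simp
  have inner: "(\<integral>x. a x * cis (s * (k * x)) \<partial>lborel) = cnj (G k)" for k
  proof -
    have eq: "(\<integral>x. F x * (complex_of_real (nd x) * cis (- s * (k * x))) \<partial>lborel) = G k"
      unfolding F_def G_def nd_def by (rule gaussian_smoothed_transform[OF s2 _ ih sig]) simp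
    have "(\<integral>x. a x * cis (s * (k * x)) \<partial>lborel)
        = (\<integral>x. cnj (F x * (complex_of_real (nd x) * cis (- s * (k * x)))) \<partial>lborel)"
      unfolding a_def by (intro Bochner_Integration.integral_cong refl) (simp add: cis_cnj)
    also have "\<dots> = cnj (G k)" by (simp only: Bochner_Integration.integral_cnj eq)
    finally show ?thesis .
  qed
  have "complex_of_real (\<integral>x. (cmod (F x))\<^sup>2 * normal_density 0 \<sigma> x \<partial>lborel) = (\<integral>x. a x * F x \<partial>lborel)"
  proof -
    have "complex_of_real ((cmod (F x))\<^sup>2 * normal_density 0 \<sigma> x) = a x * F x" for x
      unfolding a_def nd_def by (simp only: of_real_mult complex_norm_square) (simp add: mult_ac)
    then show ?thesis by (simp flip: integral_complex_of_real)
  qed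
  also have "\<dots> = (\<integral>x. a x * (\<integral>k. h k * cis (s * (k * x)) \<partial>lborel) \<partial>lborel)"
    unfolding F_def by (simp add: mult.commute)
  also have "\<dots> = (\<integral>k. h k * (\<integral>x. a x * cis (s * (k * x)) \<partial>lborel) \<partial>lborel)"
    by (rule integral_swap_bounded_kernel) (use ia ih in auto)
  also have "\<dots> = (\<integral>k. h k * cnj (G k) \<partial>lborel)" by (simp add: inner)
  finally show "complex_of_real (\<integral>x. (cmod (F x))\<^sup>2 * normal_density 0 \<sigma> x \<partial>lborel) = (\<integral>k. h k * cnj (G k) \<partial>lborel)" .
qed

text \<open>The norm of a Bochner integral is bounded by the integral of the norm, without any
  integrability hypothesis (a non-integrable function has integral zero).\<close>
lemma norm_integral_le_nn_integral:
  fixes f :: "'a \<Rightarrow> 'b::{banach,second_countable_topology}"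
  shows "ennreal (norm (integral\<^sup>L M f)) \<le> (\<integral>\<^sup>+x. norm (f x) \<partial>M)"
  by (cases "integrable M f") (auto simp: integral_norm_bound_ennreal not_integrable_integral_eq)

text \<open>By the Schur test, the Gaussian-weighted energy of F is bounded by sqrt(2 pi)/sigma int |h|^2.\<close>
lemma smoothed_energy_bound:
  fixes h :: "real \<Rightarrow> complex"
  assumes s2: "s * s = 1" and [measurable]: "h \<in> borel_measurable borel"
    and ih: "integrable lborel h" and ih2: "integrable lborel (\<lambda>k. (cmod (h k))\<^sup>2)" and sig: "\<sigma> > 0"
  defines "F \<equiv> \<lambda>x. \<integral>k. cis (s * (k * x)) * h k \<partial>lborel"
  shows "(\<integral>x. (cmod (F x))\<^sup>2 * normal_density 0 \<sigma> x \<partial>lborel) \<le> sqrt (2 * pi) / \<sigma> * (\<integral>k. (cmod (h k))\<^sup>2 \<partial>lborel)"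
proof -
  define E where "E k k' = exp (- (\<sigma> * (k' - k))\<^sup>2 / 2)" for k k'
  define G where "G k = (\<integral>k'. h k' * complex_of_real (E k k') \<partial>lborel)" for k
  define R where "R = (\<integral>x. (cmod (F x))\<^sup>2 * normal_density 0 \<sigma> x \<partial>lborel)"
  have R_eq: "complex_of_real R = (\<integral>k. h k * cnj (G k) \<partial>lborel)"
    unfolding R_def F_def G_def E_def by (rule smoothed_energy_identity(2)[OF s2 _ ih sig]) simp
  have "R \<ge> 0" unfolding R_def by (intro integral_nonneg_AE) auto
  then have "ennreal R = ennreal (norm (\<integral>k. h k * cnj (G k) \<partial>lborel))"
    by (simp flip: R_eq)
  also have "\<dots> \<le> (\<integral>\<^sup>+k. ennreal (cmod (h k)) * ennreal (cmod (G k)) \<partial>lborel)"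
    by (rule order_trans[OF norm_integral_le_nn_integral]) (simp add: norm_mult ennreal_mult)
  also have "\<dots> \<le> (\<integral>\<^sup>+k. ennreal (cmod (h k)) * (\<integral>\<^sup>+k'. ennreal (cmod (h k') * E k k') \<partial>lborel) \<partial>lborel)"
  proof (intro nn_integral_mono mult_left_mono)
    fix k
    show "ennreal (cmod (G k)) \<le> (\<integral>\<^sup>+k'. ennreal (cmod (h k') * E k k') \<partial>lborel)"
      unfolding G_def using norm_integral_le_nn_integral[of lborel "\<lambda>k'. h k' * complex_of_real (E k k')"]
      by (simp add: norm_mult E_def)
  qed simp
  also have "\<dots> = (\<integral>\<^sup>+k. \<integral>\<^sup>+k'. ennreal (cmod (h k) * cmod (h k') * E k k') \<partial>lborel \<partial>lborel)"
    by (simp add: E_def ennreal_mult mult.assoc flip: nn_integral_cmult)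
  also have "\<dots> \<le> ennreal (sqrt (2 * pi) / \<sigma>) * (\<integral>\<^sup>+k. ennreal ((cmod (h k))\<^sup>2) \<partial>lborel)"
  proof (rule schur_test_symmetric_kernel)
    show "(\<lambda>(k, k'). E k k') \<in> borel_measurable (lborel \<Otimes>\<^sub>M lborel)" unfolding E_def by measurable
    show "E k k' = E k' k" for k k' unfolding E_def by (simp add: power2_commute algebra_simps)
    show "(\<integral>\<^sup>+k'. ennreal (E k k') \<partial>lborel) \<le> ennreal (sqrt (2 * pi) / \<sigma>)" for k
      unfolding E_def gauss_kernel_row_integral[OF sig] ..
  qed (auto simp: E_def)
  also have "\<dots> = ennreal (sqrt (2 * pi) / \<sigma> * (\<integral>k. (cmod (h k))\<^sup>2 \<partial>lborel))"
    unfolding nn_integral_eq_integral[OF ih2 AE_I2[OF zero_le_power2]]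
    using sig by (intro ennreal_mult[symmetric]) (auto intro: integral_nonneg_AE)
  finally show ?thesis
    unfolding R_def using sig by (subst (asm) ennreal_le_iff) (auto intro!: integral_nonneg_AE)
qed

lemma damped_energy_bound:
  fixes h :: "real \<Rightarrow> complex"
  assumes s2: "s * s = 1" and [measurable]: "h \<in> borel_measurable borel"
    and ih: "integrable lborel h" and ih2: "integrable lborel (\<lambda>k. (cmod (h k))\<^sup>2)" and sig: "\<sigma> > 0"
  defines "F \<equiv> \<lambda>x. \<integral>k. cis (s * (k * x)) * h k \<partial>lborel"
  shows "integrable lborel (\<lambda>x. (cmod (F x))\<^sup>2 * exp (- x\<^sup>2 / 2 * (inverse \<sigma>)\<^sup>2))"
    and "(\<integral>x. (cmod (F x))\<^sup>2 * exp (- x\<^sup>2 / 2 * (inverse \<sigma>)\<^sup>2) \<partial>lborel) \<le> 2 * pi * (\<integral>k. (cmod (h k))\<^sup>2 \<partial>lborel)"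
proof -
  have weight: "exp (- x\<^sup>2 / 2 * (inverse \<sigma>)\<^sup>2) = (\<sigma> * sqrt (2 * pi)) * normal_density 0 \<sigma> x" for x
  proof -
    have "sqrt (2 * pi * \<sigma>\<^sup>2) = \<sigma> * sqrt (2 * pi)" using sig by (simp add: real_sqrt_mult)
    moreover have "- x\<^sup>2 / 2 * (inverse \<sigma>)\<^sup>2 = - x\<^sup>2 / (2 * \<sigma>\<^sup>2)" using sig by (simp add: field_simps)
    ultimately show ?thesis unfolding normal_density_def using sig by (simp add: field_simps)
  qed
  have int: "integrable lborel (\<lambda>x. (cmod (F x))\<^sup>2 * normal_density 0 \<sigma> x)"
    unfolding F_def by (rule smoothed_energy_identity(1)[OF s2 _ ih sig]) simp
  show "integrable lborel (\<lambda>x. (cmod (F x))\<^sup>2 * exp (- x\<^sup>2 / 2 * (inverse \<sigma>)\<^sup>2))"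
    unfolding weight using integrable_mult_right[OF int, of "\<sigma> * sqrt (2 * pi)"] by (simp add: ac_simps)
  have "(\<integral>x. (cmod (F x))\<^sup>2 * exp (- x\<^sup>2 / 2 * (inverse \<sigma>)\<^sup>2) \<partial>lborel)
      = (\<integral>x. (\<sigma> * sqrt (2 * pi)) * ((cmod (F x))\<^sup>2 * normal_density 0 \<sigma> x) \<partial>lborel)"
    unfolding weight by (simp only: ac_simps)
  also have "\<dots> = (\<sigma> * sqrt (2 * pi)) * (\<integral>x. (cmod (F x))\<^sup>2 * normal_density 0 \<sigma> x \<partial>lborel)"
    by (rule integral_mult_right_zero)
  also have "\<dots> \<le> (\<sigma> * sqrt (2 * pi)) * (sqrt (2 * pi) / \<sigma> * (\<integral>k. (cmod (h k))\<^sup>2 \<partial>lborel))"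
    using sig unfolding F_def by (intro mult_left_mono smoothed_energy_bound[OF s2 _ ih ih2 sig]) auto
  also have "\<dots> = 2 * pi * (\<integral>k. (cmod (h k))\<^sup>2 \<partial>lborel)"
    using sig by (simp add: field_simps)
  finally show "(\<integral>x. (cmod (F x))\<^sup>2 * exp (- x\<^sup>2 / 2 * (inverse \<sigma>)\<^sup>2) \<partial>lborel) \<le> 2 * pi * (\<integral>k. (cmod (h k))\<^sup>2 \<partial>lborel)" .
qed

text \<open>Letting sigma tend to infinity (Fatou) gives the Plancherel inequality.\<close>
lemma plancherel_inequality:
  fixes h :: "real \<Rightarrow> complex"
  assumes s2: "s * s = 1" and [measurable]: "h \<in> borel_measurable borel"
    and ih: "integrable lborel h" and ih2: "integrable lborel (\<lambda>k. (cmod (h k))\<^sup>2)"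
  defines "F \<equiv> \<lambda>x. \<integral>k. cis (s * (k * x)) * h k \<partial>lborel"
  shows "integrable lborel (\<lambda>x. (cmod (F x))\<^sup>2)"
    and "(\<integral>x. (cmod (F x))\<^sup>2 \<partial>lborel) \<le> 2 * pi * (\<integral>k. (cmod (h k))\<^sup>2 \<partial>lborel)"
proof -
  define H where "H = (\<integral>k. (cmod (h k))\<^sup>2 \<partial>lborel)"
  have [measurable]: "F \<in> borel_measurable borel" unfolding F_def by measurable
  define w where "w n x = (cmod (F x))\<^sup>2 * exp (- x\<^sup>2 / 2 * (inverse (real (Suc n)))\<^sup>2)" for n x
  have w_bound: "(\<integral>\<^sup>+x. ennreal (w n x) \<partial>lborel) \<le> ennreal (2 * pi * H)" for n
  proof -
    have int: "integrable lborel (w n)" and le: "(\<integral>x. w n x \<partial>lborel) \<le> 2 * pi * H"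
      unfolding w_def H_def F_def using damped_energy_bound[OF s2 _ ih ih2, of "real (Suc n)"] by auto
    have "(\<integral>\<^sup>+x. ennreal (w n x) \<partial>lborel) = ennreal (\<integral>x. w n x \<partial>lborel)"
      by (rule nn_integral_eq_integral[OF int]) (simp add: w_def)
    with le show ?thesis by (simp add: ennreal_leI)
  qed
  have w_lim: "(\<lambda>n. ennreal (w n x)) \<longlonglongrightarrow> ennreal ((cmod (F x))\<^sup>2)" for x
  proof -
    have "(\<lambda>n. w n x) \<longlonglongrightarrow> (cmod (F x))\<^sup>2 * exp (- x\<^sup>2 / 2 * 0\<^sup>2)"
      unfolding w_def by (intro tendsto_intros LIMSEQ_inverse_real_of_nat)
    then show ?thesis by (intro tendsto_ennrealI) simp
  qed
  have "(\<integral>\<^sup>+x. ennreal ((cmod (F x))\<^sup>2) \<partial>lborel) = (\<integral>\<^sup>+x. liminf (\<lambda>n. ennreal (w n x)) \<partial>lborel)"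
    by (intro nn_integral_cong) (simp add: lim_imp_Liminf[OF _ w_lim])
  also have "\<dots> \<le> liminf (\<lambda>n. \<integral>\<^sup>+x. ennreal (w n x) \<partial>lborel)"
    by (rule nn_integral_liminf) (simp add: w_def)
  also have "\<dots> \<le> ennreal (2 * pi * H)"
    using w_bound by (intro order_trans[OF Liminf_le_Limsup Limsup_bounded] always_eventually allI) simp_all
  finally have NN: "(\<integral>\<^sup>+x. ennreal ((cmod (F x))\<^sup>2) \<partial>lborel) \<le> ennreal (2 * pi * H)" .
  show int: "integrable lborel (\<lambda>x. (cmod (F x))\<^sup>2)"
    using NN by (intro integrableI_bounded) (auto simp: top.not_eq_extremum intro: order_le_less_trans)
  have "H \<ge> 0" unfolding H_def by simp
  with NN show "(\<integral>x. (cmod (F x))\<^sup>2 \<partial>lborel) \<le> 2 * pi * (\<integral>k. (cmod (h k))\<^sup>2 \<partial>lborel)"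
    unfolding H_def[symmetric] by (subst (asm) nn_integral_eq_integral[OF int]) (auto simp: ennreal_le_iff)
qed

text \<open>Test functions.  Integrating by parts, each derivative multiplies the Fourier transform
  by i k, so the transform of a smooth compactly supported function decays faster than any power.\<close>
lemma cis_has_vector_derivative:
  "((\<lambda>x. cis (- (k * x))) has_vector_derivative (- (\<i> * complex_of_real k)) * cis (- (k * x))) (at x within S)"
proof -
  have "((\<lambda>x. - (k * x)) has_derivative (\<lambda>t. - (k * t))) (at x within S)"
    by (auto intro!: derivative_eq_intros)
  from has_derivative_cis[OF this] show ?thesis
    unfolding has_vector_derivative_def
    by (rule has_derivative_eq_rhs) (simp add: fun_eq_iff scaleR_conv_of_real)
qed

context
  fixes u :: "real \<Rightarrow> complex" and D :: "nat \<Rightarrow> real \<Rightarrow> complex"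
  assumes D0: "D 0 = u" and D_deriv: "\<And>j x. (D j has_vector_derivative D (Suc j) x) (at x)"
    and supp_compact: "compact (fsupport u)"
begin

lemma D_vanish: "x \<notin> fsupport u \<Longrightarrow> D j x = 0"
proof (induction j arbitrary: x)
  case 0
  then have "x \<notin> {x. u x \<noteq> 0}"
    unfolding fsupport_def using closure_subset[of "{x. u x \<noteq> 0}"] by blast
  then show ?case unfolding D0 by simp
next
  case (Suc j)
  have "open (- fsupport u)" using supp_compact compact_imp_closed by blast
  then have "((\<lambda>y. 0) has_vector_derivative D (Suc j) x) (at x)"
    by (rule has_vector_derivative_transform_within_open[OF D_deriv]) (use Suc in auto)
  then show ?case by (rule vector_derivative_unique_at) simp
qed

lemma D_cont: "continuous_on A (D j)"
  by (intro continuous_at_imp_continuous_on ballI has_vector_derivative_continuous[OF D_deriv])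

lemma D_meas: "D j \<in> borel_measurable borel"
  by (intro borel_measurable_continuous_onI D_cont)

lemma D_integrable: "integrable lborel (D j)"
proof -
  have "integrable lborel (\<lambda>x. indicator (fsupport u) x *\<^sub>R D j x)"
    by (rule borel_integrable_compact[OF supp_compact D_cont])
  moreover have "(\<lambda>x. indicator (fsupport u) x *\<^sub>R D j x) = D j"
  proof
    fix x show "indicator (fsupport u) x *\<^sub>R D j x = D j x"
      using D_vanish[of x j] by (cases "x \<in> fsupport u") auto
  qed
  ultimately show ?thesis by simp
qed

lemma D_bounded: "\<exists>B. \<forall>x. cmod (D j x) \<le> B"
proof -
  have "bounded (D j ` fsupport u)"
    by (rule compact_imp_bounded[OF compact_continuous_image[OF D_cont supp_compact]])
  then obtain B where B: "\<And>x. x \<in> fsupport u \<Longrightarrow> cmod (D j x) \<le> B"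
    unfolding bounded_iff by blast
  have "cmod (D j x) \<le> max B 0" for x
    using B[of x] D_vanish[of x j] by (cases "x \<in> fsupport u") auto
  then show ?thesis by blast
qed

lemma u_L2: "L2 u"
proof -
  have [measurable]: "u \<in> borel_measurable borel" using D_meas[of 0] unfolding D0 .
  obtain B where B: "\<And>x. cmod (u x) \<le> B" using D_bounded[of 0] unfolding D0 by blast
  have "integrable lborel (\<lambda>x. (cmod (u x))\<^sup>2)"
  proof (rule integrable_by_bound[of _ "\<lambda>x. B * cmod (u x)"])
    show "integrable lborel (\<lambda>x. B * cmod (u x))" using D_integrable[of 0] unfolding D0 by simp
    show "norm ((cmod (u x))\<^sup>2) \<le> B * cmod (u x)" for x
      using B[of x] by (simp add: power2_eq_square mult_right_mono)
  qed measurable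
  then show ?thesis unfolding L2_iff by simp
qed

lemma fourier_D_Suc: "fourier (D (Suc j)) k = \<i> * complex_of_real k * fourier (D j) k"
proof -
  obtain R where R: "R > 0" "fsupport u \<subseteq> ball 0 R"
    using compact_imp_bounded[OF supp_compact] bounded_subset_ballD by blast
  define g where "g x = cis (- (k * x)) * D j x" for x
  define g' where "g' x = cis (- (k * x)) * D (Suc j) x - \<i> * complex_of_real k * (cis (- (k * x)) * D j x)" for x
  have "integral\<^sup>L lborel (\<lambda>x. indicator {-R..R} x *\<^sub>R g' x) = g R - g (- R)"
  proof (rule integral_FTC_atLeastAtMost)
    show "continuous_on {- R..R} g'" unfolding g'_def by (intro continuous_intros D_cont)
    show "(g has_vector_derivative g' x) (at x within {- R..R})" for x
      unfolding g_def g'_def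
      by (rule has_vector_derivative_eq_rhs,
          rule has_vector_derivative_mult[OF cis_has_vector_derivative has_vector_derivative_at_within[OF D_deriv]])
        (simp add: algebra_simps)
  qed (use R in simp)
  also have "\<dots> = 0"
  proof -
    have "R \<notin> fsupport u" "- R \<notin> fsupport u" using R by auto
    then show ?thesis unfolding g_def using D_vanish by simp
  qed
  also have "(\<lambda>x. indicator {-R..R} x *\<^sub>R g' x) = g'"
  proof
    fix x show "indicator {-R..R} x *\<^sub>R g' x = g' x"
    proof (cases "x \<in> {-R..R}")
      case False
      then have "x \<notin> fsupport u" using R by (auto simp: dist_real_def abs_le_iff)
      then show ?thesis unfolding g'_def using D_vanish by simp
    qed simp
  qed
  finally have "integral\<^sup>L lborel g' = 0" .
  moreover have "integrable lborel (\<lambda>x. cis (- (k * x)) * D i x)" for i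
  proof (rule integrable_by_bound[of _ "\<lambda>x. cmod (D i x)"])
    have [measurable]: "D i \<in> borel_measurable borel" by (rule D_meas)
    show "(\<lambda>x. cis (- (k * x)) * D i x) \<in> borel_measurable borel" by measurable
  qed (use D_integrable in \<open>auto simp: norm_mult\<close>)
  ultimately show ?thesis unfolding g'_def fourier_def by simp
qed

lemma fourier_D: "fourier (D j) k = (\<i> * complex_of_real k) ^ j * fourier u k"
  by (induction j) (simp_all add: D0 fourier_D_Suc)

lemma fourier_decay: "\<bar>k\<bar> ^ j * cmod (fourier u k) \<le> (\<integral>x. cmod (D j x) \<partial>lborel)"
proof -
  have "cmod (fourier (D j) k) \<le> (\<integral>x. cmod (D j x) \<partial>lborel)"
    unfolding fourier_def using integral_norm_bound[of lborel "\<lambda>x. cis (- (k * x)) * D j x"]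
    by (simp add: norm_mult)
  then show ?thesis unfolding fourier_D by (simp add: norm_mult norm_power)
qed

end

text \<open>(1 + x)^N <= 2^N (1 + x^N), to dominate (1 + k^2)^N by the two powers k^0 and k^2N.\<close>
lemma one_plus_power_le: "(x::real) \<ge> 0 \<Longrightarrow> (1 + x) ^ N \<le> 2 ^ N * (1 + x ^ N)"
proof (cases "x \<le> 1")
  case True
  assume "x \<ge> 0"
  with True have "(1 + x) ^ N \<le> 2 ^ N" by (intro power_mono) auto
  also have "\<dots> \<le> 2 ^ N * (1 + x ^ N)" using \<open>x \<ge> 0\<close> by simp
  finally show ?thesis .
next
  case False
  then have "(1 + x) ^ N \<le> (2 * x) ^ N" by (intro power_mono) auto
  also have "\<dots> \<le> 2 ^ N * (1 + x ^ N)" by (simp add: power_mult_distrib)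
  finally show ?thesis .
qed

lemma test_function_fourier_decay:
  assumes "smooth_fun u" "compact (fsupport u)"
  shows "\<exists>C. \<forall>k. (1 + k\<^sup>2) ^ N * cmod (fourier u k) \<le> C"
proof -
  obtain D where D0: "D 0 = u" and D_deriv: "\<And>j x. (D j has_vector_derivative D (Suc j) x) (at x)"
    using assms(1) unfolding smooth_fun_def by blast
  define I where "I j = (\<integral>x. cmod (D j x) \<partial>lborel)" for j
  have bound: "(1 + k\<^sup>2) ^ N * cmod (fourier u k) \<le> 2 ^ N * (I 0 + I (2 * N))" for k
  proof -
    have "(1 + k\<^sup>2) ^ N * cmod (fourier u k) \<le> (2 ^ N * (1 + (k\<^sup>2) ^ N)) * cmod (fourier u k)"
      by (intro mult_right_mono one_plus_power_le) auto
    also have "\<dots> = 2 ^ N * (\<bar>k\<bar> ^ 0 * cmod (fourier u k) + \<bar>k\<bar> ^ (2 * N) * cmod (fourier u k))"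
    proof -
      have "\<bar>k\<bar> ^ (2 * N) = (k\<^sup>2) ^ N" by (simp only: power_mult power2_abs)
      then show ?thesis by (simp add: algebra_simps)
    qed
    also have "\<dots> \<le> 2 ^ N * (I 0 + I (2 * N))"
      unfolding I_def
      by (intro mult_left_mono add_mono fourier_decay[where u=u and D=D, OF D0 D_deriv assms(2)]) simp
    finally show ?thesis .
  qed
  show ?thesis by (intro exI allI) (rule bound)
qed

lemma test_function_L2:
  assumes "smooth_fun u" "compact (fsupport u)"
  shows "L2 u" and "integrable lborel u"
proof -
  obtain D where D0: "D 0 = u" and D_deriv: "\<And>j x. (D j has_vector_derivative D (Suc j) x) (at x)"
    using assms(1) unfolding smooth_fun_def by blast
  show "L2 u" by (rule u_L2[where u=u and D=D, OF D0 D_deriv assms(2)])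
  have "integrable lborel (D 0)" by (rule D_integrable[where u=u and D=D, OF D0 D_deriv assms(2)])
  then show "integrable lborel u" unfolding D0 .
qed

lemma fourier_measurable[measurable]:
  assumes [measurable]: "g \<in> borel_measurable borel"
  shows "fourier g \<in> borel_measurable borel"
  unfolding fourier_def[abs_def] by measurable

lemma integrable_cis_mult:
  fixes g :: "real \<Rightarrow> complex"
  assumes [measurable]: "g \<in> borel_measurable borel" "t \<in> borel_measurable borel"
    and "integrable lborel g"
  shows "integrable lborel (\<lambda>x. cis (t x) * g x)"
  by (rule integrable_by_bound[of _ "\<lambda>x. cmod (g x)"]) (use assms in \<open>auto simp: norm_mult\<close>)

lemma fourier_add:
  assumes [measurable]: "f \<in> borel_measurable borel" "g \<in> borel_measurable borel"
    and "integrable lborel f" "integrable lborel g"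
  shows "fourier (\<lambda>x. f x + g x) k = fourier f k + fourier g k"
proof -
  have "integrable lborel (\<lambda>x. cis (- (k * x)) * f x)" "integrable lborel (\<lambda>x. cis (- (k * x)) * g x)"
    using assms by (auto intro!: integrable_cis_mult)
  then show ?thesis unfolding fourier_def by (simp add: distrib_left)
qed

lemma fourier_L2:
  assumes [measurable]: "g \<in> borel_measurable borel" and "integrable lborel g" "L2 g"
  shows "L2 (fourier g)" and "(L2norm (fourier g))\<^sup>2 \<le> 2 * pi * (L2norm g)\<^sup>2"
proof -
  have eq: "fourier g = (\<lambda>k. \<integral>x. cis (- 1 * (x * k)) * g x \<partial>lborel)"
    unfolding fourier_def[abs_def] by (simp add: mult.commute)
  have "integrable lborel (\<lambda>x. (cmod (g x))\<^sup>2)" using assms(3) by (simp add: L2_iff)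
  note P = plancherel_inequality[of "- 1" g, OF _ _ assms(2) this]
  show "L2 (fourier g)" unfolding L2_iff eq using P(1) by simp
  show "(L2norm (fourier g))\<^sup>2 \<le> 2 * pi * (L2norm g)\<^sup>2" unfolding L2norm_sq eq using P(2) by simp
qed

lemma fourier_L2norm_le:
  assumes "g \<in> borel_measurable borel" "integrable lborel g" "L2 g"
  shows "L2norm (fourier g) \<le> sqrt (2 * pi) * L2norm g"
proof -
  have "L2norm (fourier g) \<le> sqrt (2 * pi * (L2norm g)\<^sup>2)"
    using fourier_L2(2)[OF assms] L2norm_nonneg real_le_rsqrt by blast
  also have "\<dots> = sqrt (2 * pi) * L2norm g" by (simp add: real_sqrt_mult L2norm_nonneg)
  finally show ?thesis .
qed

text \<open>Fourier multipliers: the operator of the statement is an explicit inverse-Fourier integral,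
  and Fubini gives Parseval's formula for its pairing with an integrable function.\<close>
lemma fmult_eq: "fmult \<sigma> g x = complex_of_real (1 / (2 * pi)) * (\<integral>k. cis (k * x) * (\<sigma> k * fourier g k) \<partial>lborel)"
  unfolding fmult_def inv_fourier_def ..

lemma inverse_fourier_pairing:
  assumes [measurable]: "p \<in> borel_measurable borel" "u \<in> borel_measurable borel"
    and ip: "integrable lborel p" and iu: "integrable lborel u"
  shows "(\<integral>x. (\<integral>k. cis (k * x) * p k \<partial>lborel) * cnj (u x) \<partial>lborel) = (\<integral>k. p k * cnj (fourier u k) \<partial>lborel)"
proof -
  have conj_fourier: "(\<integral>x. cnj (u x) * cis (k * x) \<partial>lborel) = cnj (fourier u k)" for k
  proof -
    have "(\<integral>x. cnj (u x) * cis (k * x) \<partial>lborel) = (\<integral>x. cnj (cis (- (k * x)) * u x) \<partial>lborel)"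
      by (intro Bochner_Integration.integral_cong refl) (simp add: cis_cnj mult.commute)
    also have "\<dots> = cnj (fourier u k)" unfolding fourier_def by (rule Bochner_Integration.integral_cnj)
    finally show ?thesis .
  qed
  have "(\<integral>x. (\<integral>k. cis (k * x) * p k \<partial>lborel) * cnj (u x) \<partial>lborel)
     = (\<integral>x. cnj (u x) * (\<integral>k. p k * cis (k * x) \<partial>lborel) \<partial>lborel)"
    by (simp add: mult.commute)
  also have "\<dots> = (\<integral>k. p k * (\<integral>x. cnj (u x) * cis (k * x) \<partial>lborel) \<partial>lborel)"
  proof (rule integral_swap_bounded_kernel)
    show "integrable lborel (\<lambda>x. cnj (u x))"
      by (rule integrable_by_bound[of _ "\<lambda>x. cmod (u x)"]) (use iu in simp_all)
  qed (use ip in simp_all)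
  also have "\<dots> = (\<integral>k. p k * cnj (fourier u k) \<partial>lborel)" by (simp only: conj_fourier)
  finally show ?thesis .
qed

lemma fmult_parseval:
  assumes [measurable]: "\<sigma> \<in> borel_measurable borel" "g \<in> borel_measurable borel" "u \<in> borel_measurable borel"
    and ia: "integrable lborel (\<lambda>k. \<sigma> k * fourier g k)" and L2a: "L2 (\<lambda>k. \<sigma> k * fourier g k)"
    and iu: "integrable lborel u"
  shows "L2 (fmult \<sigma> g)"
    and "(\<integral>x. fmult \<sigma> g x * cnj (u x) \<partial>lborel)
         = complex_of_real (1 / (2 * pi)) * (\<integral>k. \<sigma> k * fourier g k * cnj (fourier u k) \<partial>lborel)"
proof -
  define F where "F x = (\<integral>k. cis (k * x) * (\<sigma> k * fourier g k) \<partial>lborel)" for x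
  have [measurable]: "F \<in> borel_measurable borel" unfolding F_def by measurable
  have fm: "fmult \<sigma> g = (\<lambda>x. complex_of_real (1 / (2 * pi)) * F x)"
    unfolding fmult_eq F_def ..
  have "integrable lborel (\<lambda>x. (cmod (F x))\<^sup>2)"
    unfolding F_def using plancherel_inequality(1)[of 1 "\<lambda>k. \<sigma> k * fourier g k"] ia L2a
    by (simp add: L2_iff)
  then have "L2 F" by (simp add: L2_iff)
  then show "L2 (fmult \<sigma> g)" unfolding fm by (rule L2_scale)
  show "(\<integral>x. fmult \<sigma> g x * cnj (u x) \<partial>lborel)
         = complex_of_real (1 / (2 * pi)) * (\<integral>k. \<sigma> k * fourier g k * cnj (fourier u k) \<partial>lborel)"
  proof -
    have "(\<integral>x. fmult \<sigma> g x * cnj (u x) \<partial>lborel)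
        = complex_of_real (1 / (2 * pi)) * (\<integral>x. F x * cnj (u x) \<partial>lborel)"
      unfolding fm by (simp add: mult.assoc)
    also have "(\<integral>x. F x * cnj (u x) \<partial>lborel) = (\<integral>k. \<sigma> k * fourier g k * cnj (fourier u k) \<partial>lborel)"
      unfolding F_def by (rule inverse_fourier_pairing) (use ia iu in auto)
    finally show ?thesis .
  qed
qed

lemma Esym_measurable[measurable]: "Esym c lam \<in> borel_measurable borel"
  unfolding Esym_def[abs_def] by measurable

lemma Esym_bounds:
  assumes "lam > 0"
  shows "cmod (Esym c lam k) \<le> 1" and "Re (Esym c lam k) \<ge> 0"
proof -
  have "lam \<le> sqrt (lam\<^sup>2 + (c * k)\<^sup>2)"
    using assms real_sqrt_le_mono[of "lam\<^sup>2" "lam\<^sup>2 + (c * k)\<^sup>2"] by simp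
  then have "lam \<le> cmod (complex_of_real lam - \<i> * complex_of_real (c * k))"
    by (simp add: cmod_def)
  then show "cmod (Esym c lam k) \<le> 1"
    unfolding Esym_def using assms by (simp add: norm_divide divide_le_eq_1)
  show "Re (Esym c lam k) \<ge> 0" unfolding Esym_def using assms by (simp add: Re_divide)
qed

lemma Esym_square_decay:
  assumes lam: "lam > 0" and c: "c \<noteq> 0"
  shows "(cmod (Esym c lam k))\<^sup>2 \<le> (1 + lam\<^sup>2 / c\<^sup>2) * inverse (1 + k\<^sup>2)"
proof -
  have pos: "lam\<^sup>2 + (c * k)\<^sup>2 > 0" using lam by (simp add: add_pos_nonneg)
  have pos2: "1 + k\<^sup>2 > 0" by (simp add: add_pos_nonneg)
  have "(cmod (Esym c lam k))\<^sup>2 = lam\<^sup>2 / (lam\<^sup>2 + (c * k)\<^sup>2)"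
    unfolding Esym_def norm_divide using lam pos by (simp add: cmod_def power_divide)
  also have "\<dots> \<le> (1 + lam\<^sup>2 / c\<^sup>2) * inverse (1 + k\<^sup>2)"
  proof -
    have "(1 + lam\<^sup>2 / c\<^sup>2) * (lam\<^sup>2 + (c * k)\<^sup>2) = lam\<^sup>2 * (1 + k\<^sup>2) + (c * k)\<^sup>2 + (lam\<^sup>2 / c)\<^sup>2"
      using c by (simp add: field_simps power2_eq_square)
    then have "lam\<^sup>2 * (1 + k\<^sup>2) \<le> (1 + lam\<^sup>2 / c\<^sup>2) * (lam\<^sup>2 + (c * k)\<^sup>2)" by simp
    then show ?thesis using pos pos2 by (simp add: field_simps)
  qed
  finally show ?thesis .
qed

lemma inverse_one_plus_square_integrable: "integrable lborel (\<lambda>k::real. inverse (1 + k\<^sup>2))"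
  using integrable_inverse_1_plus_square unfolding set_integrable_def by simp

lemma Esym_L2:
  assumes "lam > 0" "c \<noteq> 0"
  shows "L2 (Esym c lam)"
  unfolding L2_iff
proof
  show "integrable lborel (\<lambda>k. (cmod (Esym c lam k))\<^sup>2)"
    by (rule integrable_by_bound[of _ "\<lambda>k. (1 + lam\<^sup>2 / c\<^sup>2) * inverse (1 + k\<^sup>2)"])
       (use inverse_one_plus_square_integrable Esym_square_decay[OF assms] in auto)
qed simp

lemma polynomial_symbol_times_decaying:
  fixes \<sigma> w :: "real \<Rightarrow> complex"
  assumes [measurable]: "\<sigma> \<in> borel_measurable borel" "w \<in> borel_measurable borel"
    and \<sigma>_bound: "\<And>k. cmod (\<sigma> k) \<le> A * (1 + k\<^sup>2) ^ M"
    and w_decay: "\<And>k. (1 + k\<^sup>2) ^ Suc M * cmod (w k) \<le> C"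
  shows "integrable lborel (\<lambda>k. \<sigma> k * w k)" and "L2 (\<lambda>k. \<sigma> k * w k)"
proof -
  have A0: "A \<ge> 0" using \<sigma>_bound[of 0] norm_ge_zero[of "\<sigma> 0"] by (simp del: norm_ge_zero)
  have bound: "cmod (\<sigma> k * w k) \<le> A * C * inverse (1 + k\<^sup>2)" for k
  proof -
    have pos: "1 + k\<^sup>2 > 0" by (simp add: add_pos_nonneg)
    have "cmod (\<sigma> k * w k) \<le> A * (1 + k\<^sup>2) ^ M * cmod (w k)"
      unfolding norm_mult by (intro mult_right_mono \<sigma>_bound) simp
    also have "\<dots> = A * ((1 + k\<^sup>2) ^ Suc M * cmod (w k)) * inverse (1 + k\<^sup>2)"
      using pos by (simp add: field_simps)
    also have "\<dots> \<le> A * C * inverse (1 + k\<^sup>2)"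
      using pos A0 w_decay[of k] by (intro mult_right_mono mult_left_mono) auto
    finally show ?thesis .
  qed
  have AC0: "A * C \<ge> 0" using bound[of 0] norm_ge_zero[of "\<sigma> 0 * w 0"] by (simp del: norm_ge_zero)
  show "integrable lborel (\<lambda>k. \<sigma> k * w k)"
    by (rule integrable_by_bound[OF _ _ bound]) (use inverse_one_plus_square_integrable in simp_all)
  have "integrable lborel (\<lambda>k. (cmod (\<sigma> k * w k))\<^sup>2)"
  proof (rule integrable_by_bound[of _ "\<lambda>k. (A * C)\<^sup>2 * inverse (1 + k\<^sup>2)"])
    show "integrable lborel (\<lambda>k. (A * C)\<^sup>2 * inverse (1 + k\<^sup>2))"
      using inverse_one_plus_square_integrable by simp
    fix k :: real
    have "(cmod (\<sigma> k * w k))\<^sup>2 \<le> (A * C * inverse (1 + k\<^sup>2))\<^sup>2" by (rule power_mono[OF bound]) simp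
    also have "\<dots> = (A * C)\<^sup>2 * inverse (1 + k\<^sup>2) * inverse (1 + k\<^sup>2)" by (simp add: power2_eq_square)
    also have "\<dots> \<le> (A * C)\<^sup>2 * inverse (1 + k\<^sup>2)"
      by (intro mult_left_le) (auto simp: inverse_le_1_iff)
    finally show "norm ((cmod (\<sigma> k * w k))\<^sup>2) \<le> (A * C)\<^sup>2 * inverse (1 + k\<^sup>2)" by simp
  qed measurable
  then show "L2 (\<lambda>k. \<sigma> k * w k)" by (simp add: L2_iff)
qed

lemma symbol_polynomial_bound:
  fixes \<alpha> :: "real \<Rightarrow> real"
  assumes growth: "\<exists>R. \<forall>k. \<bar>k\<bar> \<ge> R \<longrightarrow> \<alpha> k \<le> b * \<bar>k\<bar> powr m"
    and locbdd: "\<forall>K. compact K \<longrightarrow> bounded (\<alpha> ` K)" and m: "m \<ge> 0" and b: "b > 0"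
  shows "\<exists>A M. \<forall>k. \<alpha> k \<le> A * (1 + k\<^sup>2) ^ M"
proof -
  obtain R where R: "\<And>k. \<bar>k\<bar> \<ge> R \<Longrightarrow> \<alpha> k \<le> b * \<bar>k\<bar> powr m" using growth by blast
  have "bounded (\<alpha> ` cball 0 \<bar>R\<bar>)" using locbdd by simp
  then obtain A0 where A0': "\<forall>k\<in>cball 0 \<bar>R\<bar>. \<bar>\<alpha> k\<bar> \<le> A0" unfolding bounded_iff by auto
  have A0: "\<alpha> k \<le> A0" if "\<bar>k\<bar> \<le> \<bar>R\<bar>" for k
    using A0'[rule_format, of k] that by (simp add: dist_real_def)
  define M where "M = nat \<lceil>m\<rceil>"
  have "\<alpha> k \<le> (max A0 0 + b) * (1 + k\<^sup>2) ^ M" for k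
  proof (cases "\<bar>k\<bar> \<le> \<bar>R\<bar>")
    case True
    have "\<alpha> k \<le> (max A0 0 + b) * 1" using A0[OF True] b by simp
    also have "\<dots> \<le> (max A0 0 + b) * (1 + k\<^sup>2) ^ M" using b by (intro mult_left_mono) auto
    finally show ?thesis .
  next
    case False
    then have "\<alpha> k \<le> b * \<bar>k\<bar> powr m" using R by simp
    also have "\<bar>k\<bar> powr m \<le> (1 + k\<^sup>2) powr m"
    proof (rule powr_mono2)
      have "2 * \<bar>k\<bar> \<le> k\<^sup>2 + 1" using sum_squares_bound[of "\<bar>k\<bar>" 1] by (simp add: power2_eq_square)
      then show "\<bar>k\<bar> \<le> 1 + k\<^sup>2" by (simp add: power2_eq_square)
    qed (use m in auto)
    also have "\<dots> \<le> (1 + k\<^sup>2) powr real M"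
      unfolding M_def by (intro powr_mono) (simp_all add: real_nat_ceiling_ge)
    also have "\<dots> = (1 + k\<^sup>2) ^ M" by (simp add: powr_realpow add_pos_nonneg)
    finally have "\<alpha> k \<le> b * (1 + k\<^sup>2) ^ M" using b by simp
    also have "\<dots> \<le> (max A0 0 + b) * (1 + k\<^sup>2) ^ M" by (intro mult_right_mono) auto
    finally show ?thesis .
  qed
  then show ?thesis by blast
qed

lemma Re_integral_nonneg:
  fixes f :: "'a \<Rightarrow> complex"
  assumes "\<And>x. Re (f x) \<ge> 0"
  shows "Re (integral\<^sup>L M f) \<ge> 0"
proof (cases "integrable M f")
  case True
  then show ?thesis using assms by (simp flip: integral_Re)
qed (simp add: not_integrable_integral_eq)

lemma L2_bounded_multiplier:
  assumes [measurable]: "m \<in> borel_measurable borel" and m_bound: "\<And>k. cmod (m k) \<le> 1" and "L2 w"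
  shows "L2 (\<lambda>k. m k * w k)"
proof -
  have [measurable]: "w \<in> borel_measurable borel" using \<open>L2 w\<close> by (simp add: L2_iff)
  have "integrable lborel (\<lambda>k. (cmod (m k * w k))\<^sup>2)"
  proof (rule integrable_by_bound[of _ "\<lambda>k. (cmod (w k))\<^sup>2"])
    show "norm ((cmod (m k * w k))\<^sup>2) \<le> (cmod (w k))\<^sup>2" for k
      using m_bound[of k] by (simp add: norm_mult power_mono mult_left_le_one_le)
  qed (use \<open>L2 w\<close> in \<open>simp_all add: L2_iff\<close>)
  then show ?thesis by (simp add: L2_iff)
qed

text \<open>Since Re E >= 0 and |E| <= 1, pairing E (w + r) against w loses at most |r| |w|:
  Re <E (w + r), w> >= - |r| |w|.\<close>
lemma Esym_pairing_lower_bound: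
  assumes lam: "lam > 0" and w: "L2 w" and r: "L2 r"
  shows "- (L2norm r * L2norm w) \<le> Re (\<integral>k. Esym c lam k * (w k + r k) * cnj (w k) \<partial>lborel)"
proof -
  have int: "integrable lborel (\<lambda>k. Esym c lam k * (w k + r k) * cnj (w k))"
    by (intro L2_pairing_integrable L2_bounded_multiplier L2_add w r Esym_bounds(1)[OF lam]) simp
  have "- (L2norm r * L2norm w) \<le> - (\<integral>k. cmod (r k) * cmod (w k) \<partial>lborel)"
    using L2_cauchy_schwarz[OF r w] by simp
  also have "\<dots> = (\<integral>k. - (cmod (r k) * cmod (w k)) \<partial>lborel)" by simp
  also have "\<dots> \<le> (\<integral>k. Re (Esym c lam k * (w k + r k) * cnj (w k)) \<partial>lborel)"
  proof (rule integral_mono)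
    show "integrable lborel (\<lambda>k. - (cmod (r k) * cmod (w k)))"
      using integrable_norm[OF L2_pairing_integrable[OF r w]] by (simp add: norm_mult)
    show "integrable lborel (\<lambda>k. Re (Esym c lam k * (w k + r k) * cnj (w k)))"
      using int by (rule integrable_Re)
    fix k
    have split: "Esym c lam k * (w k + r k) * cnj (w k)
        = Esym c lam k * complex_of_real ((cmod (w k))\<^sup>2) + Esym c lam k * r k * cnj (w k)"
      by (simp add: algebra_simps flip: complex_norm_square)
    have "- Re (Esym c lam k * r k * cnj (w k)) \<le> cmod (Esym c lam k * r k * cnj (w k))"
      using complex_Re_le_cmod[of "- (Esym c lam k * r k * cnj (w k))"] by simp
    also have "\<dots> \<le> cmod (r k) * cmod (w k)"
      using Esym_bounds(1)[OF lam, of c k] by (simp add: norm_mult mult_left_le_one_le mult.assoc)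
    finally have perturbation: "- (cmod (r k) * cmod (w k)) \<le> Re (Esym c lam k * r k * cnj (w k))"
      by simp
    have "0 \<le> Re (Esym c lam k * complex_of_real ((cmod (w k))\<^sup>2))"
      using Esym_bounds(2)[OF lam, of c k] by simp
    then show "- (cmod (r k) * cmod (w k)) \<le> Re (Esym c lam k * (w k + r k) * cnj (w k))"
      unfolding split plus_complex.sel using perturbation by linarith
  qed
  also have "\<dots> = Re (\<integral>k. Esym c lam k * (w k + r k) * cnj (w k) \<partial>lborel)"
    by (rule integral_Re[OF int])
  finally show ?thesis .
qed

context
  fixes \<alpha> df uc :: "real \<Rightarrow> real" and u :: "real \<Rightarrow> complex" and c lam \<delta> A :: real and M :: nat
  assumes u_smooth: "smooth_fun u" and u_supp: "compact (fsupport u)"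
    and uc_meas: "uc \<in> borel_measurable borel" and df_meas: "df \<in> borel_measurable borel"
    and df_small: "\<And>x. u x \<noteq> 0 \<Longrightarrow> \<bar>df (uc x)\<bar> \<le> \<delta>" and \<delta>_nonneg: "\<delta> \<ge> 0"
    and \<alpha>_meas: "\<alpha> \<in> borel_measurable borel" and \<alpha>_nonneg: "\<And>k. \<alpha> k \<ge> 0"
    and \<alpha>_poly: "\<And>k. \<alpha> k \<le> A * (1 + k\<^sup>2) ^ M"
    and lam: "lam > 0" and c: "c > 0"
begin

lemma u_facts: "L2 u" "integrable lborel u" "u \<in> borel_measurable borel"
  using test_function_L2[OF u_smooth u_supp] by (auto simp: L2_iff)

lemma perturbation_facts:
  shows "L2 (\<lambda>x. complex_of_real (df (uc x)) * u x)"
    and "integrable lborel (\<lambda>x. complex_of_real (df (uc x)) * u x)"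
    and "L2norm (\<lambda>x. complex_of_real (df (uc x)) * u x) \<le> \<delta> * L2norm u"
proof -
  note [measurable] = uc_meas df_meas u_facts(3)
  let ?h = "\<lambda>x. complex_of_real (df (uc x)) * u x"
  have bound: "cmod (?h x) \<le> \<delta> * cmod (u x)" for x
    using df_small[of x] by (cases "u x = 0") (auto simp: norm_mult intro: mult_right_mono)
  have bound2: "(cmod (?h x))\<^sup>2 \<le> \<delta>\<^sup>2 * (cmod (u x))\<^sup>2" for x
    using power_mono[OF bound[of x]] by (simp add: power_mult_distrib)
  have iu2: "integrable lborel (\<lambda>x. (cmod (u x))\<^sup>2)" using u_facts(1) by (simp add: L2_iff)
  have ih2: "integrable lborel (\<lambda>x. (cmod (?h x))\<^sup>2)"
    by (rule integrable_by_bound[of _ "\<lambda>x. \<delta>\<^sup>2 * (cmod (u x))\<^sup>2"]) (use iu2 bound2 in auto)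
  then show "L2 ?h" by (simp add: L2_iff)
  show "integrable lborel ?h"
    by (rule integrable_by_bound[of _ "\<lambda>x. \<delta> * cmod (u x)"]) (use u_facts(2) bound in auto)
  have "(L2norm ?h)\<^sup>2 \<le> (\<delta> * L2norm u)\<^sup>2"
    unfolding L2norm_sq power_mult_distrib
    using integral_mono[OF ih2 _ bound2] iu2 by simp
  then show "L2norm ?h \<le> \<delta> * L2norm u"
    by (rule power2_le_imp_le) (simp add: \<delta>_nonneg L2norm_nonneg)
qed

lemma weighted_facts:
  shows "L2 (\<lambda>x. (1 + complex_of_real (df (uc x))) * u x)"
    and "integrable lborel (\<lambda>x. (1 + complex_of_real (df (uc x))) * u x)"
    and "fourier (\<lambda>x. (1 + complex_of_real (df (uc x))) * u x) k
         = fourier u k + fourier (\<lambda>x. complex_of_real (df (uc x)) * u x) k"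
proof -
  note [measurable] = uc_meas df_meas u_facts(3)
  have split: "(\<lambda>x. (1 + complex_of_real (df (uc x))) * u x) = (\<lambda>x. u x + complex_of_real (df (uc x)) * u x)"
    by (simp add: fun_eq_iff algebra_simps)
  show "L2 (\<lambda>x. (1 + complex_of_real (df (uc x))) * u x)"
    unfolding split by (intro L2_add u_facts perturbation_facts)
  show "integrable lborel (\<lambda>x. (1 + complex_of_real (df (uc x))) * u x)"
    unfolding split using u_facts(2) perturbation_facts(2) by simp
  show "fourier (\<lambda>x. (1 + complex_of_real (df (uc x))) * u x) k
         = fourier u k + fourier (\<lambda>x. complex_of_real (df (uc x)) * u x) k"
    unfolding split by (rule fourier_add) (use u_facts(2) perturbation_facts(2) in auto)
qed

lemma dispersive_part:
  shows "integrable lborel (\<lambda>k. complex_of_real (\<alpha> k) * fourier u k)"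
    and "L2 (\<lambda>k. complex_of_real (\<alpha> k) * fourier u k)"
    and "Re (\<integral>k. complex_of_real (\<alpha> k) * fourier u k * cnj (fourier u k) \<partial>lborel) \<ge> 0"
proof -
  note [measurable] = \<alpha>_meas u_facts(3)
  obtain C where "\<And>k. (1 + k\<^sup>2) ^ Suc M * cmod (fourier u k) \<le> C"
    using test_function_fourier_decay[OF u_smooth u_supp] by blast
  note P = polynomial_symbol_times_decaying[of "\<lambda>k. complex_of_real (\<alpha> k)" "fourier u" A M, OF _ _ _ this]
  show "integrable lborel (\<lambda>k. complex_of_real (\<alpha> k) * fourier u k)"
    and "L2 (\<lambda>k. complex_of_real (\<alpha> k) * fourier u k)"
    using P \<alpha>_poly \<alpha>_nonneg by auto
  show "Re (\<integral>k. complex_of_real (\<alpha> k) * fourier u k * cnj (fourier u k) \<partial>lborel) \<ge> 0"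
    by (rule Re_integral_nonneg) (simp add: mult.assoc \<alpha>_nonneg flip: complex_norm_square)
qed

text \<open>The damped term: E acts on the transform of (1 + f'(u_c)) u, which differs from the
  transform of u by the transform of the perturbation.\<close>
lemma damped_part:
  fixes g :: "real \<Rightarrow> complex"
  defines "g \<equiv> \<lambda>x. (1 + complex_of_real (df (uc x))) * u x"
  shows "integrable lborel (\<lambda>k. Esym c lam k * fourier g k)"
    and "L2 (\<lambda>k. Esym c lam k * fourier g k)"
    and "Re (\<integral>k. Esym c lam k * fourier g k * cnj (fourier u k) \<partial>lborel) \<ge> - (2 * pi * \<delta> * (L2norm u)\<^sup>2)"
proof -
  note [measurable] = uc_meas df_meas u_facts(3)
  let ?h = "\<lambda>x. complex_of_real (df (uc x)) * u x"
  have [measurable]: "g \<in> borel_measurable borel" unfolding g_def by measurable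
  have g: "L2 g" "integrable lborel g" unfolding g_def using weighted_facts by auto
  have Lg: "L2 (fourier g)" by (rule fourier_L2(1)[OF _ g(2,1)]) simp
  show "integrable lborel (\<lambda>k. Esym c lam k * fourier g k)"
    by (rule L2_mult_integrable[OF Esym_L2[OF lam] Lg]) (use c in simp)
  show "L2 (\<lambda>k. Esym c lam k * fourier g k)"
    by (rule L2_bounded_multiplier[OF _ Esym_bounds(1)[OF lam] Lg]) simp
  have Lu: "L2 (fourier u)" by (rule fourier_L2(1)[OF _ u_facts(2,1)]) simp
  have Lh: "L2 (fourier ?h)" by (rule fourier_L2(1)[OF _ perturbation_facts(2,1)]) simp
  have "L2norm (fourier ?h) \<le> sqrt (2 * pi) * L2norm ?h"
    using perturbation_facts(1,2) by (intro fourier_L2norm_le) (auto simp: L2_iff)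
  also have "\<dots> \<le> sqrt (2 * pi) * (\<delta> * L2norm u)"
    by (intro mult_left_mono perturbation_facts(3)) simp
  finally have "L2norm (fourier ?h) * L2norm (fourier u) \<le> (sqrt (2 * pi) * (\<delta> * L2norm u)) * (sqrt (2 * pi) * L2norm u)"
    using fourier_L2norm_le[OF u_facts(3,2,1)] by (intro mult_mono) (simp_all add: L2norm_nonneg \<delta>_nonneg)
  also have "\<dots> = 2 * pi * \<delta> * (L2norm u)\<^sup>2" by (simp add: power2_eq_square)
  finally have "- (2 * pi * \<delta> * (L2norm u)\<^sup>2) \<le> - (L2norm (fourier ?h) * L2norm (fourier u))" by simp
  also have "\<dots> \<le> Re (\<integral>k. Esym c lam k * (fourier u k + fourier ?h k) * cnj (fourier u k) \<partial>lborel)"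
    by (rule Esym_pairing_lower_bound[OF lam Lu Lh])
  also have "\<dots> = Re (\<integral>k. Esym c lam k * fourier g k * cnj (fourier u k) \<partial>lborel)"
    unfolding g_def weighted_facts(3) ..
  finally show "Re (\<integral>k. Esym c lam k * fourier g k * cnj (fourier u k) \<partial>lborel) \<ge> - (2 * pi * \<delta> * (L2norm u)\<^sup>2)" .
qed

lemma local_part:
  "Re (\<integral>x. (1 + complex_of_real (df (uc x))) * u x * cnj (u x) \<partial>lborel) \<le> (1 + \<delta>) * (L2norm u)\<^sup>2"
proof -
  let ?g = "\<lambda>x. (1 + complex_of_real (df (uc x))) * u x"
  have ig: "integrable lborel (\<lambda>x. ?g x * cnj (u x))"
    by (rule L2_pairing_integrable[OF weighted_facts(1) u_facts(1)])
  have pointwise: "Re (?g x * cnj (u x)) \<le> (1 + \<delta>) * (cmod (u x))\<^sup>2" for x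
  proof -
    have "?g x * cnj (u x) = complex_of_real (1 + df (uc x)) * complex_of_real ((cmod (u x))\<^sup>2)"
      by (simp only: mult.assoc complex_norm_square of_real_add of_real_1)
    then have "Re (?g x * cnj (u x)) = (1 + df (uc x)) * (cmod (u x))\<^sup>2"
      by (simp only: of_real_mult[symmetric] Re_complex_of_real)
    moreover have "(1 + df (uc x)) * (cmod (u x))\<^sup>2 \<le> (1 + \<delta>) * (cmod (u x))\<^sup>2"
      using df_small[of x] by (cases "u x = 0") (auto intro: mult_right_mono)
    ultimately show ?thesis by simp
  qed
  have "Re (\<integral>x. ?g x * cnj (u x) \<partial>lborel) = (\<integral>x. Re (?g x * cnj (u x)) \<partial>lborel)"
    by (rule integral_Re[OF ig, symmetric])
  also have "\<dots> \<le> (\<integral>x. (1 + \<delta>) * (cmod (u x))\<^sup>2 \<partial>lborel)"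
    by (rule integral_mono[OF integrable_Re[OF ig] _ pointwise]) (use u_facts(1) in \<open>simp add: L2_iff\<close>)
  also have "\<dots> = (1 + \<delta>) * (L2norm u)\<^sup>2" by (simp add: L2norm_sq)
  finally show ?thesis .
qed

lemma pairing_self: "(\<integral>x. u x * cnj (u x) \<partial>lborel) = complex_of_real ((L2norm u)\<^sup>2)"
  unfolding L2norm_sq by (simp flip: complex_norm_square integral_complex_of_real)

lemma Aop_pairing_expansion:
  fixes z :: complex
  defines "g \<equiv> \<lambda>x. (1 + complex_of_real (df (uc x))) * u x"
  shows "L2 (\<lambda>x. Aop \<alpha> df c uc lam u x - z * u x)"
    and "(\<integral>x. (Aop \<alpha> df c uc lam u x - z * u x) * cnj (u x) \<partial>lborel)
         = complex_of_real (1 / (2 * pi)) * (\<integral>k. complex_of_real (\<alpha> k) * fourier u k * cnj (fourier u k) \<partial>lborel)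
           + complex_of_real ((L2norm u)\<^sup>2)
           - complex_of_real (1 / c) * ((\<integral>x. g x * cnj (u x) \<partial>lborel)
              - complex_of_real (1 / (2 * pi)) * (\<integral>k. Esym c lam k * fourier g k * cnj (fourier u k) \<partial>lborel))
           - z * complex_of_real ((L2norm u)\<^sup>2)"
proof -
  note [measurable] = uc_meas df_meas u_facts(3) \<alpha>_meas
  have [measurable]: "g \<in> borel_measurable borel" unfolding g_def by measurable
  let ?F1 = "fmult (\<lambda>k. complex_of_real (\<alpha> k)) u" and ?F2 = "fmult (Esym c lam) g"
  note P1 = fmult_parseval[of "\<lambda>k. complex_of_real (\<alpha> k)" u u, OF _ _ _ dispersive_part(1,2) u_facts(2)]
  note P2 = fmult_parseval[of "Esym c lam" g u, OF _ _ _ damped_part(1,2)[folded g_def] u_facts(2)]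
  have Lg: "L2 g" unfolding g_def by (rule weighted_facts(1))
  have v_eq: "Aop \<alpha> df c uc lam u x - z * u x
      = ?F1 x + u x - complex_of_real (1 / c) * (g x - ?F2 x) - z * u x" for x
    unfolding Aop_def Let_def g_def ..
  have L1: "L2 ?F1" and L2': "L2 ?F2" using P1(1) P2(1) by simp_all
  show "L2 (\<lambda>x. Aop \<alpha> df c uc lam u x - z * u x)"
    unfolding v_eq by (intro L2_diff L2_add L2_scale L1 L2' Lg u_facts(1))
  have i: "integrable lborel (\<lambda>x. f x * cnj (u x))" if "L2 f" for f
    using L2_pairing_integrable[OF that u_facts(1)] .
  have pointwise: "(Aop \<alpha> df c uc lam u x - z * u x) * cnj (u x)
      = ?F1 x * cnj (u x) + u x * cnj (u x)
        - complex_of_real (1 / c) * (g x * cnj (u x) - ?F2 x * cnj (u x)) - z * (u x * cnj (u x))" for x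
    unfolding v_eq by (simp add: algebra_simps)
  have "(\<integral>x. (Aop \<alpha> df c uc lam u x - z * u x) * cnj (u x) \<partial>lborel)
      = (\<integral>x. ?F1 x * cnj (u x) \<partial>lborel) + (\<integral>x. u x * cnj (u x) \<partial>lborel)
        - complex_of_real (1 / c) * ((\<integral>x. g x * cnj (u x) \<partial>lborel) - (\<integral>x. ?F2 x * cnj (u x) \<partial>lborel))
        - z * (\<integral>x. u x * cnj (u x) \<partial>lborel)"
    unfolding pointwise using i[OF L1] i[OF L2'] i[OF Lg] i[OF u_facts(1)] by simp
  note expansion = this
  show "(\<integral>x. (Aop \<alpha> df c uc lam u x - z * u x) * cnj (u x) \<partial>lborel)
         = complex_of_real (1 / (2 * pi)) * (\<integral>k. complex_of_real (\<alpha> k) * fourier u k * cnj (fourier u k) \<partial>lborel)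
           + complex_of_real ((L2norm u)\<^sup>2)
           - complex_of_real (1 / c) * ((\<integral>x. g x * cnj (u x) \<partial>lborel)
              - complex_of_real (1 / (2 * pi)) * (\<integral>k. Esym c lam k * fourier g k * cnj (fourier u k) \<partial>lborel))
           - z * complex_of_real ((L2norm u)\<^sup>2)"
  proof -
    have "(\<integral>x. ?F1 x * cnj (u x) \<partial>lborel)
        = complex_of_real (1 / (2 * pi)) * (\<integral>k. complex_of_real (\<alpha> k) * fourier u k * cnj (fourier u k) \<partial>lborel)"
      using P1(2) by simp
    moreover have "(\<integral>x. ?F2 x * cnj (u x) \<partial>lborel)
        = complex_of_real (1 / (2 * pi)) * (\<integral>k. Esym c lam k * fourier g k * cnj (fourier u k) \<partial>lborel)"
      using P2(2) by simp
    ultimately show ?thesis using expansion by (simp only: pairing_self)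
  qed
qed

lemma Aop_form_lower_bound:
  "(1 - (1 + 2 * \<delta>) / c - Re z) * (L2norm u)\<^sup>2
     \<le> Re (\<integral>x. (Aop \<alpha> df c uc lam u x - z * u x) * cnj (u x) \<partial>lborel)"
proof -
  define U where "U = (L2norm u)\<^sup>2"
  define p1 where "p1 = Re (\<integral>k. complex_of_real (\<alpha> k) * fourier u k * cnj (fourier u k) \<partial>lborel)"
  define pg where "pg = Re (\<integral>x. (1 + complex_of_real (df (uc x))) * u x * cnj (u x) \<partial>lborel)"
  define p2 where "p2 = Re (\<integral>k. Esym c lam k * fourier (\<lambda>x. (1 + complex_of_real (df (uc x))) * u x) k
                            * cnj (fourier u k) \<partial>lborel)"
  have re: "Re (\<integral>x. (Aop \<alpha> df c uc lam u x - z * u x) * cnj (u x) \<partial>lborel)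
      = p1 / (2 * pi) + U - (pg - p2 / (2 * pi)) / c - Re z * U"
    unfolding Aop_pairing_expansion(2) p1_def pg_def p2_def U_def by simp
  have "p1 \<ge> 0" unfolding p1_def by (rule dispersive_part(3))
  have pg: "pg \<le> (1 + \<delta>) * U" unfolding pg_def U_def by (rule local_part)
  have "- (2 * pi * \<delta> * U) / (2 * pi) \<le> p2 / (2 * pi)"
    unfolding p2_def U_def by (rule divide_right_mono[OF damped_part(3)]) simp
  then have "- (\<delta> * U) \<le> p2 / (2 * pi)" by simp
  with pg have "pg - p2 / (2 * pi) \<le> (1 + 2 * \<delta>) * U" by (simp add: algebra_simps)
  then have "(pg - p2 / (2 * pi)) / c \<le> (1 + 2 * \<delta>) / c * U"
    using c by (simp add: divide_right_mono)
  moreover have "p1 / (2 * pi) \<ge> 0" using \<open>p1 \<ge> 0\<close> by simp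
  moreover have "(1 - (1 + 2 * \<delta>) / c - Re z) * U = U - (1 + 2 * \<delta>) / c * U - Re z * U"
    by (simp add: algebra_simps)
  ultimately show ?thesis unfolding re U_def[symmetric]
    by (smt (verit))
qed

end

text \<open>With delta = (c - 1)/8 and Re z <= (1 - 1/c)/2 the form bound leaves a quarter of 1 - 1/c,
  which gives the resolvent estimate for every lam > 0.\<close>
lemma Aop_coercive:
  fixes z :: complex
  assumes u_smooth: "smooth_fun u" and u_supp: "compact (fsupport u)"
    and "uc \<in> borel_measurable borel" "df \<in> borel_measurable borel"
    and df_small: "\<And>x. u x \<noteq> 0 \<Longrightarrow> \<bar>df (uc x)\<bar> \<le> (c - 1) / 8"
    and "\<alpha> \<in> borel_measurable borel" "\<And>k. \<alpha> k \<ge> 0" "\<And>k. \<alpha> k \<le> A * (1 + k\<^sup>2) ^ M"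
    and lam: "lam > 0" and c: "c > 1" and z_re: "Re z \<le> 1 / 2 * (1 - 1 / c)"
  shows "1 / 4 * (1 - 1 / c) * L2norm u \<le> L2norm (\<lambda>x. Aop \<alpha> df c uc lam u x - z * u x)"
proof (rule L2norm_ge_of_pairing)
  have \<delta>: "(c - 1) / 8 \<ge> 0" and c0: "c > 0" using c by simp_all
  note form = Aop_form_lower_bound[OF u_smooth u_supp assms(3,4) df_small \<delta> assms(6-8) lam c0]
  show "L2 (\<lambda>x. Aop \<alpha> df c uc lam u x - z * u x)"
    by (rule Aop_pairing_expansion(1)[OF u_smooth u_supp assms(3,4) df_small \<delta> assms(6-8) lam c0])
  show "L2 u" by (rule test_function_L2(1)[OF u_smooth u_supp])
  have "1 - (1 + 2 * ((c - 1) / 8)) / c = 3 / 4 * (1 - 1 / c)"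
    using c by (simp add: field_simps)
  then have "1 / 4 * (1 - 1 / c) \<le> 1 - (1 + 2 * ((c - 1) / 8)) / c - Re z"
    using z_re by linarith
  then have "1 / 4 * (1 - 1 / c) * (L2norm u)\<^sup>2 \<le> (1 - (1 + 2 * ((c - 1) / 8)) / c - Re z) * (L2norm u)\<^sup>2"
    by (rule mult_right_mono) simp
  also have "\<dots> \<le> Re (\<integral>x. (Aop \<alpha> df c uc lam u x - z * u x) * cnj (u x) \<partial>lborel)"
    by (rule form)
  finally show "1 / 4 * (1 - 1 / c) * (L2norm u)\<^sup>2 \<le> Re (\<integral>x. (Aop \<alpha> df c uc lam u x - z * u x) * cnj (u x) \<partial>lborel)" .
qed

lemma coefficient_small_at_infinity:
  fixes uc df :: "real \<Rightarrow> real"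
  assumes "(uc \<longlongrightarrow> 0) at_infinity" "isCont df 0" "df 0 = 0" "\<delta> > 0"
  shows "\<exists>n>0. \<forall>x. \<bar>x\<bar> \<ge> n \<longrightarrow> \<bar>df (uc x)\<bar> \<le> \<delta>"
proof -
  have "((\<lambda>x. df (uc x)) \<longlongrightarrow> 0) at_infinity"
    using isCont_tendsto_compose[OF assms(2,1)] assms(3) by simp
  then have "\<forall>\<^sub>F x in at_infinity. \<bar>df (uc x)\<bar> < \<delta>"
    using assms(4) by (auto simp: tendsto_iff dist_real_def)
  then obtain b0 where "\<And>x. norm x \<ge> b0 \<Longrightarrow> \<bar>df (uc x)\<bar> < \<delta>"
    unfolding eventually_at_infinity by blast
  then show ?thesis by (intro exI[of _ "max b0 1"]) force
qed

lemma test_on_nonzero_in: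
  assumes "test_on S u" "u x \<noteq> 0"
  shows "x \<in> S"
proof -
  have "x \<in> fsupport u"
    unfolding fsupport_def using assms(2) closure_subset[of "{x. u x \<noteq> 0}"] by (simp add: subset_iff)
  then show ?thesis using assms(1) unfolding test_on_def by blast
qed

lemma sobolev_real_measurable:
  "sobolev m (\<lambda>x. complex_of_real (uc x)) \<Longrightarrow> uc \<in> borel_measurable borel"
proof -
  assume "sobolev m (\<lambda>x. complex_of_real (uc x))"
  then have [measurable]: "(\<lambda>x. complex_of_real (uc x)) \<in> borel_measurable borel"
    unfolding sobolev_def is_L2_fourier_def L2_def by auto
  have "(\<lambda>x. Re (complex_of_real (uc x))) \<in> borel_measurable borel" by measurable
  then show ?thesis by simp
qed

theorem mainTheorem9:
  fixes f df \<alpha> uc :: "real \<Rightarrow> real" and a b m c :: real and z :: complex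
  assumes f_deriv: "\<forall>x. (f has_real_derivative df x) (at x)"
    and df_cont: "continuous_on UNIV df"
    and f0: "f 0 = 0" and df0: "df 0 = 0"
    and m_ge: "m \<ge> 1" and a_pos: "a > 0" and b_pos: "b > 0"
    and \<alpha>_meas: "\<alpha> \<in> borel_measurable borel"
    and \<alpha>_nonneg: "\<forall>k. \<alpha> k \<ge> 0"
    and \<alpha>_growth: "\<exists>R. \<forall>k. \<bar>k\<bar> \<ge> R \<longrightarrow> a * \<bar>k\<bar> powr m \<le> \<alpha> k \<and> \<alpha> k \<le> b * \<bar>k\<bar> powr m"
    and \<alpha>_locbdd: "\<forall>K. compact K \<longrightarrow> bounded (\<alpha> ` K)"
    and c_gt: "c > 1"
    and uc_Hm: "sobolev m (\<lambda>x. complex_of_real (uc x))"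
    and uc_sol: "solves_profile_eq \<alpha> f c uc"
    and uc_decay: "(uc \<longlongrightarrow> 0) at_infinity"
    and z_re: "Re z \<le> 1 / 2 * (1 - 1 / c)"
  shows "\<exists>n>0. \<forall>u. test_on {x. \<bar>x\<bar> \<ge> n} u \<longrightarrow>
           (\<forall>\<^sub>F lam in at_right 0.
              L2norm (\<lambda>x. Aop \<alpha> df c uc lam u x - z * u x) \<ge> 1 / 4 * (1 - 1 / c) * L2norm u)"
proof -
  obtain n where n: "n > 0" and small: "\<And>x. \<bar>x\<bar> \<ge> n \<Longrightarrow> \<bar>df (uc x)\<bar> \<le> (c - 1) / 8"
    using coefficient_small_at_infinity[where uc=uc and df=df and \<delta>="(c - 1) / 8", OF uc_decay _ df0]
      df_cont c_gt by (auto simp: continuous_on_eq_continuous_at)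
  obtain A M where \<alpha>_poly: "\<And>k. \<alpha> k \<le> A * (1 + k\<^sup>2) ^ M"
    using symbol_polynomial_bound[of \<alpha> b m] \<alpha>_growth \<alpha>_locbdd m_ge b_pos by fastforce
  have df_meas: "df \<in> borel_measurable borel" by (intro borel_measurable_continuous_onI df_cont)
  have "\<forall>\<^sub>F lam in at_right 0. 1 / 4 * (1 - 1 / c) * L2norm u \<le> L2norm (\<lambda>x. Aop \<alpha> df c uc lam u x - z * u x)"
    if u: "test_on {x. \<bar>x\<bar> \<ge> n} u" for u
    using eventually_at_right_less[of "0::real"]
  proof (rule eventually_mono)
    fix lam :: real assume lam: "lam > 0"
    have "smooth_fun u" "compact (fsupport u)" using u unfolding test_on_def by auto
    moreover have "\<bar>df (uc x)\<bar> \<le> (c - 1) / 8" if "u x \<noteq> 0" for x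
      using small test_on_nonzero_in[OF u that] by simp
    ultimately show "1 / 4 * (1 - 1 / c) * L2norm u \<le> L2norm (\<lambda>x. Aop \<alpha> df c uc lam u x - z * u x)"
      using \<alpha>_nonneg
      by (intro Aop_coercive[OF _ _ sobolev_real_measurable[OF uc_Hm] df_meas _ \<alpha>_meas _ \<alpha>_poly lam c_gt z_re]) auto
  qed
  with n show ?thesis by auto
qed

end
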